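(* Let $k$ be a field, let $B$ be a unital associative $k$-algebra and let $(J_i)_{i\in I}$ be a covering of $B$, i.e.\ a finite family of two-sided ideals of $B$ with $\bigcap_{i\in I}J_i=\{0\}$. For $i,j\in I$ put $B_i=B/J_i$, $B_{ij}=B/(J_i+J_j)$, with canonical surjections $\pi_i:B\to B_i$, $\pi_{ij}:B\to B_{ij}$, and let $\pi^i_j:B_i\to B_{ij}$, $b+J_i\mapsto b+J_i+J_j$. Let $A=\bigoplus_{i\in I}B_i$ (product algebra) and $\mathcal{C}=\bigoplus_{i,j\in I}B_{ij}$. Then $\mathcal{C}$ is an $A$-bimodule with actions $$(a_i)_{i\in I}\cdot(a_{jk})_{j,k\in I}\cdot(a'_l)_{l\in I}=\big(\pi^j_k(a_j)\,a_{jk}\,\pi^k_j(a'_k)\big)_{j,k\in I}$$ for $a_i,a'_i\in B_i$, $a_{jk}\in B_{jk}$, and $\mathcal{C}$ is an $A$-coring with coproduct $$\Delta_{\mathcal{C}}\big((\pi_{ij}(b_{ij}))_{i,j\in I}\big)=\sum_{k\in I}\big(\pi_{il}(b_{ik})\big)_{i,l\in I}\otimes_A\big(\pi_{mj}(\delta_{kj}1_B)\big)_{m,j\in I}$$ (equivalently $=\sum_{k\in I}\big(\pi_{il}(\delta_{ik}1_B)\big)_{i,l\in I}\otimes_A\big(\pi_{mj}(b_{kj})\big)_{m,j\in I}$) and counit $$\varepsilon_{\mathcal{C}}\big((\pi_{ij}(b_{ij}))_{i,j\in I}\big)=(\pi_i(b_{ii}))_{i\in I},$$ for all $b_{ij}\in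 B$; in particular these maps are well defined.
   Context: Here $\delta_{kj}1_B$ denotes $1_B$ if $k=j$ and $0$ otherwise. For a $k$-algebra $A$, an $A$-coring is an $A$-bimodule $\mathcal{C}$ together with $A$-bimodule maps $\Delta_{\mathcal{C}}:\mathcal{C}\to\mathcal{C}\otimes_A\mathcal{C}$ and $\varepsilon_{\mathcal{C}}:\mathcal{C}\to A$ such that $(\Delta_{\mathcal{C}}\otimes_A\mathrm{id})\circ\Delta_{\mathcal{C}}=(\mathrm{id}\otimes_A\Delta_{\mathcal{C}})\circ\Delta_{\mathcal{C}}$ and $(\varepsilon_{\mathcal{C}}\otimes_A\mathrm{id})\circ\Delta_{\mathcal{C}}=(\mathrm{id}\otimes_A\varepsilon_{\mathcal{C}})\circ\Delta_{\mathcal{C}}=\mathrm{id}_{\mathcal{C}}$ (with the canonical identifications $A\otimes_A\mathcal{C}\cong\mathcal{C}\cong\mathcal{C}\otimes_A A$). *)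

theory Defs
  imports "HOL-Library.FuncSet" "HOL-Library.Multiset"
begin

definition k_algebra :: "('k::field \<Rightarrow> 'b::ring_1 \<Rightarrow> 'b) \<Rightarrow> bool" where
  "k_algebra sc \<longleftrightarrow>
     (\<forall>x. sc 1 x = x) \<and>
     (\<forall>c d x. sc c (sc d x) = sc (c * d) x) \<and>
     (\<forall>c d x. sc (c + d) x = sc c x + sc d x) \<and>
     (\<forall>c x y. sc c (x + y) = sc c x + sc c y) \<and>
     (\<forall>c x y. sc c (x * y) = sc c x * y \<and> sc c (x * y) = x * sc c y)"

definition two_sided_ideal :: "'b::ring_1 set \<Rightarrow> bool" where
  "two_sided_ideal J \<longleftrightarrow>
     0 \<in> J \<and> (\<forall>x\<in>J. \<forall>y\<in>J. x + y \<in> J) \<and> (\<forall>x\<in>J. - x \<in> J) \<and>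
     (\<forall>x\<in>J. \<forall>b. b * x \<in> J \<and> x * b \<in> J)"

definition isum :: "'b::ring_1 set \<Rightarrow> 'b set \<Rightarrow> 'b set" where
  "isum J K = {x + y |x y. x \<in> J \<and> y \<in> K}"

definition cos :: "'b::ring_1 set \<Rightarrow> 'b \<Rightarrow> 'b set" where
  "cos J b = {b + x |x. x \<in> J}"   \<comment> \<open>canonical surjection B \<rightarrow> B/J, b \<mapsto> b + J\<close>

definition qcar :: "'b::ring_1 set \<Rightarrow> 'b set set" where
  "qcar J = range (cos J)"

definition rep :: "'b set \<Rightarrow> 'b" where
  "rep X = (SOME x. x \<in> X)"

definition qadd :: "'b::ring_1 set \<Rightarrow> 'b set \<Rightarrow> 'b set \<Rightarrow> 'b set" where
  "qadd K X Y = cos K (rep X + rep Y)"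

definition qmul :: "'b::ring_1 set \<Rightarrow> 'b set \<Rightarrow> 'b set \<Rightarrow> 'b set" where
  "qmul K X Y = cos K (rep X * rep Y)"

definition qneg :: "'b::ring_1 set \<Rightarrow> 'b set \<Rightarrow> 'b set" where
  "qneg K X = cos K (- rep X)"

definition JJ :: "('i \<Rightarrow> 'b::ring_1 set) \<Rightarrow> 'i \<times> 'i \<Rightarrow> 'b set" where
  "JJ J p = isum (J (fst p)) (J (snd p))"

text \<open>The map pi^j_k : B_j \<rightarrow> B_jk, b + J_j \<mapsto> b + J_j + J_k.\<close>
definition qlift :: "'b::ring_1 set \<Rightarrow> 'b set \<Rightarrow> 'b set" where
  "qlift K X = cos K (rep X)"

definition Acar :: "'i set \<Rightarrow> ('i \<Rightarrow> 'b::ring_1 set) \<Rightarrow> ('i \<Rightarrow> 'b set) set" where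
  "Acar I J = (\<Pi>\<^sub>E i\<in>I. qcar (J i))"

definition Aadd :: "'i set \<Rightarrow> ('i \<Rightarrow> 'b::ring_1 set) \<Rightarrow> ('i \<Rightarrow> 'b set) \<Rightarrow> ('i \<Rightarrow> 'b set) \<Rightarrow> ('i \<Rightarrow> 'b set)" where
  "Aadd I J a a' = (\<lambda>i\<in>I. qadd (J i) (a i) (a' i))"

definition Amul :: "'i set \<Rightarrow> ('i \<Rightarrow> 'b::ring_1 set) \<Rightarrow> ('i \<Rightarrow> 'b set) \<Rightarrow> ('i \<Rightarrow> 'b set) \<Rightarrow> ('i \<Rightarrow> 'b set)" where
  "Amul I J a a' = (\<lambda>i\<in>I. qmul (J i) (a i) (a' i))"

definition Aone :: "'i set \<Rightarrow> ('i \<Rightarrow> 'b::ring_1 set) \<Rightarrow> ('i \<Rightarrow> 'b set)" where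
  "Aone I J = (\<lambda>i\<in>I. cos (J i) 1)"

definition kA :: "('k \<Rightarrow> 'b::ring_1 \<Rightarrow> 'b) \<Rightarrow> 'i set \<Rightarrow> ('i \<Rightarrow> 'b set) \<Rightarrow> 'k \<Rightarrow> ('i \<Rightarrow> 'b set)" where
  "kA sc I J c = (\<lambda>i\<in>I. cos (J i) (sc c 1))"

definition Ccar :: "'i set \<Rightarrow> ('i \<Rightarrow> 'b::ring_1 set) \<Rightarrow> ('i \<times> 'i \<Rightarrow> 'b set) set" where
  "Ccar I J = (\<Pi>\<^sub>E p\<in>I \<times> I. qcar (JJ J p))"

definition Cadd :: "'i set \<Rightarrow> ('i \<Rightarrow> 'b::ring_1 set) \<Rightarrow> ('i \<times> 'i \<Rightarrow> 'b set) \<Rightarrow> ('i \<times> 'i \<Rightarrow> 'b set) \<Rightarrow> ('i \<times> 'i \<Rightarrow> 'b set)" where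
  "Cadd I J c c' = (\<lambda>p\<in>I \<times> I. qadd (JJ J p) (c p) (c' p))"

definition Czero :: "'i set \<Rightarrow> ('i \<Rightarrow> 'b::ring_1 set) \<Rightarrow> ('i \<times> 'i \<Rightarrow> 'b set)" where
  "Czero I J = (\<lambda>p\<in>I \<times> I. cos (JJ J p) 0)"

definition Cneg :: "'i set \<Rightarrow> ('i \<Rightarrow> 'b::ring_1 set) \<Rightarrow> ('i \<times> 'i \<Rightarrow> 'b set) \<Rightarrow> ('i \<times> 'i \<Rightarrow> 'b set)" where
  "Cneg I J c = (\<lambda>p\<in>I \<times> I. qneg (JJ J p) (c p))"

text \<open>Left action: (a . c)_{jk} = pi^j_k(a_j) c_{jk}; right action: (c . a')_{jk} = c_{jk} pi^k_j(a'_k).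
  (Note J_k + J_j = J_j + J_k.)\<close>
definition lact :: "'i set \<Rightarrow> ('i \<Rightarrow> 'b::ring_1 set) \<Rightarrow> ('i \<Rightarrow> 'b set) \<Rightarrow> ('i \<times> 'i \<Rightarrow> 'b set) \<Rightarrow> ('i \<times> 'i \<Rightarrow> 'b set)" where
  "lact I J a c = (\<lambda>p\<in>I \<times> I. qmul (JJ J p) (qlift (JJ J p) (a (fst p))) (c p))"

definition ract :: "'i set \<Rightarrow> ('i \<Rightarrow> 'b::ring_1 set) \<Rightarrow> ('i \<times> 'i \<Rightarrow> 'b set) \<Rightarrow> ('i \<Rightarrow> 'b set) \<Rightarrow> ('i \<times> 'i \<Rightarrow> 'b set)" where
  "ract I J c a = (\<lambda>p\<in>I \<times> I. qmul (JJ J p) (c p) (qlift (JJ J p) (a (snd p))))"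

definition bimodule ::
  "'a set \<Rightarrow> ('a \<Rightarrow> 'a \<Rightarrow> 'a) \<Rightarrow> ('a \<Rightarrow> 'a \<Rightarrow> 'a) \<Rightarrow> 'a \<Rightarrow>
   'm set \<Rightarrow> ('m \<Rightarrow> 'm \<Rightarrow> 'm) \<Rightarrow> 'm \<Rightarrow> ('m \<Rightarrow> 'm) \<Rightarrow> ('a \<Rightarrow> 'm \<Rightarrow> 'm) \<Rightarrow> ('m \<Rightarrow> 'a \<Rightarrow> 'm) \<Rightarrow> bool" where
  "bimodule SA addA mulA oneA SM addM zeroM negM l r \<longleftrightarrow>
     zeroM \<in> SM \<and> (\<forall>x\<in>SM. \<forall>y\<in>SM. addM x y \<in> SM) \<and> (\<forall>x\<in>SM. negM x \<in> SM) \<and>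
     (\<forall>x\<in>SM. \<forall>y\<in>SM. \<forall>z\<in>SM. addM (addM x y) z = addM x (addM y z)) \<and>
     (\<forall>x\<in>SM. \<forall>y\<in>SM. addM x y = addM y x) \<and>
     (\<forall>x\<in>SM. addM zeroM x = x) \<and> (\<forall>x\<in>SM. addM (negM x) x = zeroM) \<and>
     (\<forall>a\<in>SA. \<forall>x\<in>SM. l a x \<in> SM \<and> r x a \<in> SM) \<and>
     (\<forall>a\<in>SA. \<forall>b\<in>SA. \<forall>x\<in>SM. l (mulA a b) x = l a (l b x) \<and> r x (mulA a b) = r (r x a) b) \<and>
     (\<forall>x\<in>SM. l oneA x = x \<and> r x oneA = x) \<and>
     (\<forall>a\<in>SA. \<forall>x\<in>SM. \<forall>y\<in>SM. l a (addM x y) = addM (l a x) (l a y) \<and>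
                             r (addM x y) a = addM (r x a) (r y a)) \<and>
     (\<forall>a\<in>SA. \<forall>b\<in>SA. \<forall>x\<in>SM. l (addA a b) x = addM (l a x) (l b x) \<and>
                             r x (addA a b) = addM (r x a) (r x b)) \<and>
     (\<forall>a\<in>SA. \<forall>b\<in>SA. \<forall>x\<in>SM. r (l a x) b = l a (r x b))"

inductive_set zspan :: "('p \<Rightarrow> int) set \<Rightarrow> ('p \<Rightarrow> int) set" for G where
  zero: "(\<lambda>_. 0) \<in> zspan G"
| gen: "g \<in> G \<Longrightarrow> g \<in> zspan G"
| add: "x \<in> zspan G \<Longrightarrow> y \<in> zspan G \<Longrightarrow> (\<lambda>p. x p + y p) \<in> zspan G"
| neg: "x \<in> zspan G \<Longrightarrow> (\<lambda>p. - x p) \<in> zspan G"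

definition ind :: "'p \<Rightarrow> 'p \<Rightarrow> int" where
  "ind p = (\<lambda>q. if q = p then 1 else 0)"

text \<open>Relations defining M \<otimes>_A M (free abelian group on M \<times> M modulo biadditivity and
  A-balancedness).\<close>
definition gens2 :: "'a set \<Rightarrow> 'm set \<Rightarrow> ('m \<Rightarrow> 'm \<Rightarrow> 'm) \<Rightarrow> ('a \<Rightarrow> 'm \<Rightarrow> 'm) \<Rightarrow> ('m \<Rightarrow> 'a \<Rightarrow> 'm)
   \<Rightarrow> ('m \<times> 'm \<Rightarrow> int) set" where
  "gens2 SA SM addM l r =
     {(\<lambda>q. ind (addM x x', y) q - ind (x, y) q - ind (x', y) q) |x x' y. x \<in> SM \<and> x' \<in> SM \<and> y \<in> SM} \<union>
     {(\<lambda>q. ind (x, addM y y') q - ind (x, y) q - ind (x, y') q) |x y y'. x \<in> SM \<and> y \<in> SM \<and> y' \<in> SM} \<union>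
     {(\<lambda>q. ind (r x a, y) q - ind (x, l a y) q) |x a y. x \<in> SM \<and> a \<in> SA \<and> y \<in> SM}"

definition gens3 :: "'a set \<Rightarrow> 'm set \<Rightarrow> ('m \<Rightarrow> 'm \<Rightarrow> 'm) \<Rightarrow> ('a \<Rightarrow> 'm \<Rightarrow> 'm) \<Rightarrow> ('m \<Rightarrow> 'a \<Rightarrow> 'm)
   \<Rightarrow> ('m \<times> 'm \<times> 'm \<Rightarrow> int) set" where
  "gens3 SA SM addM l r =
     {(\<lambda>q. ind (addM x x', y, z) q - ind (x, y, z) q - ind (x', y, z) q) |x x' y z.
        x \<in> SM \<and> x' \<in> SM \<and> y \<in> SM \<and> z \<in> SM} \<union>
     {(\<lambda>q. ind (x, addM y y', z) q - ind (x, y, z) q - ind (x, y', z) q) |x y y' z.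
        x \<in> SM \<and> y \<in> SM \<and> y' \<in> SM \<and> z \<in> SM} \<union>
     {(\<lambda>q. ind (x, y, addM z z') q - ind (x, y, z) q - ind (x, y, z') q) |x y z z'.
        x \<in> SM \<and> y \<in> SM \<and> z \<in> SM \<and> z' \<in> SM} \<union>
     {(\<lambda>q. ind (r x a, y, z) q - ind (x, l a y, z) q) |x a y z.
        x \<in> SM \<and> a \<in> SA \<and> y \<in> SM \<and> z \<in> SM} \<union>
     {(\<lambda>q. ind (x, r y a, z) q - ind (x, y, l a z) q) |x y a z.
        x \<in> SM \<and> y \<in> SM \<and> a \<in> SA \<and> z \<in> SM}"

text \<open>Formal sums of elementary tensors are finite multisets of tuples; two formal sums
  (supported in the carrier) represent the same tensor iff their difference lies in the
  relation subgroup.\<close>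
definition teq2 :: "'a set \<Rightarrow> 'm set \<Rightarrow> ('m \<Rightarrow> 'm \<Rightarrow> 'm) \<Rightarrow> ('a \<Rightarrow> 'm \<Rightarrow> 'm) \<Rightarrow> ('m \<Rightarrow> 'a \<Rightarrow> 'm)
   \<Rightarrow> ('m \<times> 'm) multiset \<Rightarrow> ('m \<times> 'm) multiset \<Rightarrow> bool" where
  "teq2 SA SM addM l r X Y \<longleftrightarrow>
     set_mset X \<subseteq> SM \<times> SM \<and> set_mset Y \<subseteq> SM \<times> SM \<and>
     (\<lambda>q. int (count X q) - int (count Y q)) \<in> zspan (gens2 SA SM addM l r)"

definition teq3 :: "'a set \<Rightarrow> 'm set \<Rightarrow> ('m \<Rightarrow> 'm \<Rightarrow> 'm) \<Rightarrow> ('a \<Rightarrow> 'm \<Rightarrow> 'm) \<Rightarrow> ('m \<Rightarrow> 'a \<Rightarrow> 'm)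
   \<Rightarrow> ('m \<times> 'm \<times> 'm) multiset \<Rightarrow> ('m \<times> 'm \<times> 'm) multiset \<Rightarrow> bool" where
  "teq3 SA SM addM l r X Y \<longleftrightarrow>
     set_mset X \<subseteq> SM \<times> SM \<times> SM \<and> set_mset Y \<subseteq> SM \<times> SM \<times> SM \<and>
     (\<lambda>q. int (count X q) - int (count Y q)) \<in> zspan (gens3 SA SM addM l r)"

definition msum :: "('m \<Rightarrow> 'm \<Rightarrow> 'm) \<Rightarrow> 'm \<Rightarrow> 'm multiset \<Rightarrow> 'm" where
  "msum add z X = foldr add (SOME xs. mset xs = X) z"

text \<open>An A-coring: the coproduct Delta c is given by a formal sum representing an element
  of C \<otimes>_A C; Delta and eps are A-bimodule maps; coassociativity (in C \<otimes>_A C \<otimes>_A C)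
  and counitality (via A \<otimes>_A C \<cong> C \<cong> C \<otimes>_A A).\<close>
definition coring ::
  "'a set \<Rightarrow> ('a \<Rightarrow> 'a \<Rightarrow> 'a) \<Rightarrow> ('a \<Rightarrow> 'a \<Rightarrow> 'a) \<Rightarrow> 'a \<Rightarrow>
   'm set \<Rightarrow> ('m \<Rightarrow> 'm \<Rightarrow> 'm) \<Rightarrow> 'm \<Rightarrow> ('m \<Rightarrow> 'm) \<Rightarrow> ('a \<Rightarrow> 'm \<Rightarrow> 'm) \<Rightarrow> ('m \<Rightarrow> 'a \<Rightarrow> 'm) \<Rightarrow>
   ('m \<Rightarrow> ('m \<times> 'm) multiset) \<Rightarrow> ('m \<Rightarrow> 'a) \<Rightarrow> bool" where
  "coring SA addA mulA oneA SM addM zeroM negM l r Delta eps \<longleftrightarrow>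
     bimodule SA addA mulA oneA SM addM zeroM negM l r \<and>
     (\<forall>c\<in>SM. set_mset (Delta c) \<subseteq> SM \<times> SM) \<and>
     (\<forall>c\<in>SM. eps c \<in> SA) \<and>
     (\<forall>c\<in>SM. \<forall>c'\<in>SM. teq2 SA SM addM l r (Delta (addM c c')) (Delta c + Delta c')) \<and>
     (\<forall>a\<in>SA. \<forall>a'\<in>SA. \<forall>c\<in>SM. teq2 SA SM addM l r (Delta (l a (r c a')))
         (image_mset (\<lambda>(x, y). (l a x, r y a')) (Delta c))) \<and>
     (\<forall>c\<in>SM. \<forall>c'\<in>SM. eps (addM c c') = addA (eps c) (eps c')) \<and>
     (\<forall>a\<in>SA. \<forall>a'\<in>SA. \<forall>c\<in>SM. eps (l a (r c a')) = mulA a (mulA (eps c) a')) \<and>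
     (\<forall>c\<in>SM. teq3 SA SM addM l r
         (sum_mset (image_mset (\<lambda>(x, y). image_mset (\<lambda>(u, v). (u, v, y)) (Delta x)) (Delta c)))
         (sum_mset (image_mset (\<lambda>(x, y). image_mset (\<lambda>(u, v). (x, u, v)) (Delta y)) (Delta c)))) \<and>
     (\<forall>c\<in>SM. msum addM zeroM (image_mset (\<lambda>(x, y). l (eps x) y) (Delta c)) = c) \<and>
     (\<forall>c\<in>SM. msum addM zeroM (image_mset (\<lambda>(x, y). r x (eps y)) (Delta c)) = c)"

definition DeltaF :: "'i set \<Rightarrow> ('i \<Rightarrow> 'b::ring_1 set) \<Rightarrow> ('i \<times> 'i \<Rightarrow> 'b)
   \<Rightarrow> (('i \<times> 'i \<Rightarrow> 'b set) \<times> ('i \<times> 'i \<Rightarrow> 'b set)) multiset" where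
  "DeltaF I J b = {# ((\<lambda>p\<in>I \<times> I. cos (JJ J p) (b (fst p, k))),
                     (\<lambda>p\<in>I \<times> I. cos (JJ J p) (if k = snd p then 1 else 0))). k \<in># mset_set I #}"

definition DeltaF' :: "'i set \<Rightarrow> ('i \<Rightarrow> 'b::ring_1 set) \<Rightarrow> ('i \<times> 'i \<Rightarrow> 'b)
   \<Rightarrow> (('i \<times> 'i \<Rightarrow> 'b set) \<times> ('i \<times> 'i \<Rightarrow> 'b set)) multiset" where
  "DeltaF' I J b = {# ((\<lambda>p\<in>I \<times> I. cos (JJ J p) (if fst p = k then 1 else 0)),
                      (\<lambda>p\<in>I \<times> I. cos (JJ J p) (b (k, snd p)))). k \<in># mset_set I #}"

definition epsF :: "'i set \<Rightarrow> ('i \<Rightarrow> 'b::ring_1 set) \<Rightarrow> ('i \<times> 'i \<Rightarrow> 'b) \<Rightarrow> ('i \<Rightarrow> 'b set)" where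
  "epsF I J b = (\<lambda>i\<in>I. cos (J i) (b (i, i)))"

definition DeltaC :: "'i set \<Rightarrow> ('i \<Rightarrow> 'b::ring_1 set) \<Rightarrow> ('i \<times> 'i \<Rightarrow> 'b set)
   \<Rightarrow> (('i \<times> 'i \<Rightarrow> 'b set) \<times> ('i \<times> 'i \<Rightarrow> 'b set)) multiset" where
  "DeltaC I J c = DeltaF I J (\<lambda>p. rep (c p))"

definition epsC :: "'i set \<Rightarrow> ('i \<Rightarrow> 'b::ring_1 set) \<Rightarrow> ('i \<times> 'i \<Rightarrow> 'b set) \<Rightarrow> ('i \<Rightarrow> 'b set)" where
  "epsC I J c = epsF I J (\<lambda>p. rep (c p))"

end

theory Submission
  imports Defs
begin

text \<open>All structure maps are computed on representatives in \<open>B\<close>; the substance lies in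
  \<open>C \<otimes>\<^sub>A C\<close>. Moving elements of \<open>A\<close> concentrated at one index across the tensor sign turns
  every \<open>x \<otimes> y\<close> into the normal form \<open>\<Sum>\<^sub>i\<^sub>,\<^sub>n\<^sub>,\<^sub>m entry i n 1 \<otimes> entry n m (x\<^sub>i\<^sub>n y\<^sub>n\<^sub>m)\<close>, whose
  class only depends on each \<open>x\<^sub>i\<^sub>n y\<^sub>n\<^sub>m\<close> modulo \<open>J\<^sub>i + J\<^sub>n + J\<^sub>m\<close>. So equalities in
  \<open>C \<otimes>\<^sub>A C\<close> reduce to congruences in \<open>B\<close>, and the coring axioms to sums like
  \<open>\<Sum>\<^sub>k b\<^sub>i\<^sub>k \<delta>\<^sub>k\<^sub>m = b\<^sub>i\<^sub>m\<close>.\<close>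

lemma sum_if_fst_eq:
  "finite A \<Longrightarrow> finite B \<Longrightarrow> n \<in> A \<Longrightarrow>
    (\<Sum>s\<in>A \<times> B. if fst s = n then g s else 0) = (\<Sum>m\<in>B. g (n, m))"
proof -
  assume fin: "finite A" "finite B" and n: "n \<in> A"
  have "(\<Sum>s\<in>A \<times> B. if fst s = n then g s else 0) = (\<Sum>x\<in>A. \<Sum>y\<in>B. if x = n then g (x, y) else 0)"
    unfolding sum.cartesian_product' fst_conv ..
  also have "\<dots> = (\<Sum>x\<in>A. if x = n then (\<Sum>y\<in>B. g (x, y)) else 0)"
    by (rule sum.cong) simp_all
  finally show ?thesis using fin n by simp
qed

lemma sum_mult_delta_right:
  "finite A \<Longrightarrow> m \<in> A \<Longrightarrow> (\<Sum>k\<in>A. f k * (if k = m then 1 else 0)) = (f m :: 'a::semiring_1)"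
  by (simp add: of_bool_def[symmetric])

lemma sum_mult_delta_left:
  "finite A \<Longrightarrow> m \<in> A \<Longrightarrow> (\<Sum>k\<in>A. (if m = k then 1 else 0) * f k) = (f m :: 'a::semiring_1)"
  by (simp add: of_bool_def[symmetric])

section \<open>Two-sided ideals and congruence modulo an ideal\<close>

lemma two_sided_ideal_zero: "two_sided_ideal K \<Longrightarrow> 0 \<in> K"
  by (simp add: two_sided_ideal_def)

lemma two_sided_ideal_add: "two_sided_ideal K \<Longrightarrow> x \<in> K \<Longrightarrow> y \<in> K \<Longrightarrow> x + y \<in> K"
  by (simp add: two_sided_ideal_def)

lemma two_sided_ideal_uminus: "two_sided_ideal K \<Longrightarrow> x \<in> K \<Longrightarrow> - x \<in> K"
  by (simp add: two_sided_ideal_def)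

lemma two_sided_ideal_mult_left: "two_sided_ideal K \<Longrightarrow> x \<in> K \<Longrightarrow> b * x \<in> K"
  by (simp add: two_sided_ideal_def)

lemma two_sided_ideal_mult_right: "two_sided_ideal K \<Longrightarrow> x \<in> K \<Longrightarrow> x * b \<in> K"
  by (simp add: two_sided_ideal_def)

lemma two_sided_ideal_isum:
  assumes J: "two_sided_ideal J" and K: "two_sided_ideal K"
  shows "two_sided_ideal (isum J K)"
  unfolding two_sided_ideal_def
proof (intro conjI ballI allI)
  show "0 \<in> isum J K"
    unfolding isum_def using two_sided_ideal_zero[OF J] two_sided_ideal_zero[OF K] by force
next
  fix x y assume "x \<in> isum J K" "y \<in> isum J K"
  then obtain a b c d where "x = a + b" "y = c + d" "a \<in> J" "b \<in> K" "c \<in> J" "d \<in> K"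
    unfolding isum_def by blast
  moreover have "x + y = (a + c) + (b + d)" using \<open>x = a + b\<close> \<open>y = c + d\<close> by (simp add: algebra_simps)
  ultimately show "x + y \<in> isum J K"
    unfolding isum_def using J K by (blast intro: two_sided_ideal_add)
next
  fix x assume "x \<in> isum J K"
  then obtain a b where "x = a + b" "a \<in> J" "b \<in> K" unfolding isum_def by blast
  moreover have "- x = (- a) + (- b)" using \<open>x = a + b\<close> by (simp add: algebra_simps)
  ultimately show "- x \<in> isum J K"
    unfolding isum_def using J K by (blast intro: two_sided_ideal_uminus)
next
  fix x y assume "x \<in> isum J K"
  then obtain a b where "x = a + b" "a \<in> J" "b \<in> K" unfolding isum_def by blast
  moreover have "y * x = y * a + y * b" using \<open>x = a + b\<close> by (simp add: algebra_simps)
  ultimately show "y * x \<in> isum J K"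
    unfolding isum_def using J K by (blast intro: two_sided_ideal_mult_left)
next
  fix x y assume "x \<in> isum J K"
  then obtain a b where "x = a + b" "a \<in> J" "b \<in> K" unfolding isum_def by blast
  moreover have "x * y = a * y + b * y" using \<open>x = a + b\<close> by (simp add: algebra_simps)
  ultimately show "x * y \<in> isum J K"
    unfolding isum_def using J K by (blast intro: two_sided_ideal_mult_right)
qed

lemma isum_upper1: "two_sided_ideal K \<Longrightarrow> J \<subseteq> isum J K"
  unfolding isum_def by (force dest: two_sided_ideal_zero)

lemma isum_upper2: "two_sided_ideal J \<Longrightarrow> K \<subseteq> isum J K"
  unfolding isum_def by (force dest: two_sided_ideal_zero)

lemma isum_mono: "J \<subseteq> J' \<Longrightarrow> K \<subseteq> K' \<Longrightarrow> isum J K \<subseteq> isum J' K'"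
  unfolding isum_def by blast

lemma isum_idem: "two_sided_ideal J \<Longrightarrow> isum J J = J"
  by (rule antisym) (force simp: isum_def intro: two_sided_ideal_add, rule isum_upper1)

definition cong_ideal :: "'b::ring_1 set \<Rightarrow> 'b \<Rightarrow> 'b \<Rightarrow> bool" where
  "cong_ideal K x y \<longleftrightarrow> x - y \<in> K"

lemma cong_ideal_refl: "two_sided_ideal K \<Longrightarrow> cong_ideal K x x"
  by (simp add: cong_ideal_def two_sided_ideal_zero)

lemma cong_ideal_sym: "two_sided_ideal K \<Longrightarrow> cong_ideal K x y \<Longrightarrow> cong_ideal K y x"
  unfolding cong_ideal_def by (metis two_sided_ideal_uminus minus_diff_eq)

lemma cong_ideal_add:
  assumes "two_sided_ideal K" "cong_ideal K a c" "cong_ideal K b d"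
  shows "cong_ideal K (a + b) (c + d)"
proof -
  have "a + b - (c + d) = (a - c) + (b - d)" by (simp add: algebra_simps)
  then show ?thesis using assms unfolding cong_ideal_def by (metis two_sided_ideal_add)
qed

lemma cong_ideal_trans: "two_sided_ideal K \<Longrightarrow> cong_ideal K x y \<Longrightarrow> cong_ideal K y z \<Longrightarrow> cong_ideal K x z"
  using cong_ideal_add[of K x y y z] by (simp add: cong_ideal_def)

lemma cong_ideal_common:
  "two_sided_ideal K \<Longrightarrow> cong_ideal K a c \<Longrightarrow> cong_ideal K b c \<Longrightarrow> cong_ideal K a b"
  by (meson cong_ideal_sym cong_ideal_trans)

lemma cong_ideal_uminus: "two_sided_ideal K \<Longrightarrow> cong_ideal K a c \<Longrightarrow> cong_ideal K (- a) (- c)"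
  using two_sided_ideal_uminus[of K "a - c"] by (simp add: cong_ideal_def)

lemma cong_ideal_mult:
  assumes "two_sided_ideal K" "cong_ideal K a c" "cong_ideal K b d"
  shows "cong_ideal K (a * b) (c * d)"
proof -
  have "a * b - c * d = (a - c) * b + c * (b - d)" by (simp add: algebra_simps)
  then show ?thesis using assms unfolding cong_ideal_def
    by (simp add: two_sided_ideal_add two_sided_ideal_mult_left two_sided_ideal_mult_right)
qed

lemma cong_ideal_sum:
  "two_sided_ideal K \<Longrightarrow> (\<And>t. t \<in> T \<Longrightarrow> cong_ideal K (f t) (g t)) \<Longrightarrow>
    cong_ideal K (sum f T) (sum g T)"
  by (induction T rule: infinite_finite_induct) (auto simp: cong_ideal_refl cong_ideal_add)

lemma cong_ideal_mono: "cong_ideal K x y \<Longrightarrow> K \<subseteq> K' \<Longrightarrow> cong_ideal K' x y"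
  unfolding cong_ideal_def by blast

lemma mem_cos: "two_sided_ideal K \<Longrightarrow> x \<in> cos K x"
  unfolding cos_def by (force dest: two_sided_ideal_zero)

lemma cos_eq_iff: "two_sided_ideal K \<Longrightarrow> cos K x = cos K y \<longleftrightarrow> cong_ideal K x y"
proof
  assume K: "two_sided_ideal K" and "cos K x = cos K y"
  then have "x \<in> cos K y" using mem_cos[OF K, of x] by simp
  then show "cong_ideal K x y" unfolding cos_def cong_ideal_def by auto
next
  assume K: "two_sided_ideal K" and "cong_ideal K x y"
  have "cos K x \<subseteq> cos K y" if "cong_ideal K x y" for x y
  proof
    fix z assume "z \<in> cos K x"
    then obtain k where "z = x + k" "k \<in> K" unfolding cos_def by blast
    moreover have "z = y + ((x - y) + k)" using \<open>z = x + k\<close> by (simp add: algebra_simps)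
    ultimately show "z \<in> cos K y"
      using that K unfolding cos_def cong_ideal_def by (blast intro: two_sided_ideal_add)
  qed
  then show "cos K x = cos K y" using \<open>cong_ideal K x y\<close> cong_ideal_sym[OF K] by blast
qed

lemma cong_rep_cos: "two_sided_ideal K \<Longrightarrow> cong_ideal K (rep (cos K x)) x"
proof -
  assume K: "two_sided_ideal K"
  have "rep (cos K x) \<in> cos K x" unfolding rep_def by (rule someI, rule mem_cos[OF K])
  then show ?thesis unfolding cos_def cong_ideal_def by auto
qed

lemma cos_rep: "two_sided_ideal K \<Longrightarrow> X \<in> qcar K \<Longrightarrow> cos K (rep X) = X"
  unfolding qcar_def using cong_rep_cos cos_eq_iff by fastforce

section \<open>Formal sums of tensors\<close>

definition fsum_eq :: "('q \<Rightarrow> int) set \<Rightarrow> 'q set \<Rightarrow> 'q multiset \<Rightarrow> 'q multiset \<Rightarrow> bool" where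
  "fsum_eq G S X Y \<longleftrightarrow> set_mset X \<subseteq> S \<and> set_mset Y \<subseteq> S \<and>
     (\<lambda>q. int (count X q) - int (count Y q)) \<in> zspan G"

lemma teq2_iff_fsum_eq: "teq2 SA SM addM l r X Y \<longleftrightarrow> fsum_eq (gens2 SA SM addM l r) (SM \<times> SM) X Y"
  by (simp add: teq2_def fsum_eq_def)

lemma teq3_iff_fsum_eq:
  "teq3 SA SM addM l r X Y \<longleftrightarrow> fsum_eq (gens3 SA SM addM l r) (SM \<times> SM \<times> SM) X Y"
  by (simp add: teq3_def fsum_eq_def)

lemma fsum_eq_refl: "set_mset X \<subseteq> S \<Longrightarrow> fsum_eq G S X X"
  unfolding fsum_eq_def using zspan.zero by simp

lemma fsum_eq_sym: "fsum_eq G S X Y \<Longrightarrow> fsum_eq G S Y X"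
  unfolding fsum_eq_def using zspan.neg[of "\<lambda>q. int (count X q) - int (count Y q)" G] by simp

lemma fsum_eq_add: "fsum_eq G S X Y \<Longrightarrow> fsum_eq G S X' Y' \<Longrightarrow> fsum_eq G S (X + X') (Y + Y')"
  unfolding fsum_eq_def
  using zspan.add[of "\<lambda>q. int (count X q) - int (count Y q)" G "\<lambda>q. int (count X' q) - int (count Y' q)"]
  by (simp add: algebra_simps)

lemma fsum_eq_trans: "fsum_eq G S X Y \<Longrightarrow> fsum_eq G S Y Z \<Longrightarrow> fsum_eq G S X Z"
  unfolding fsum_eq_def
  using zspan.add[of "\<lambda>q. int (count X q) - int (count Y q)" G "\<lambda>q. int (count Y q) - int (count Z q)"]
  by simp

lemma fsum_eq_cancel: "fsum_eq G S (X + Z) (Y + Z) \<Longrightarrow> fsum_eq G S X Y"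
  unfolding fsum_eq_def by auto

lemma fsum_eq_sum: "(\<And>t. t \<in> T \<Longrightarrow> fsum_eq G S (F t) (H t)) \<Longrightarrow> fsum_eq G S (sum F T) (sum H T)"
  by (induction T rule: infinite_finite_induct) (auto simp: fsum_eq_refl fsum_eq_add)

lemma fsum_eq_gen:
  "g \<in> G \<Longrightarrow> set_mset X \<subseteq> S \<Longrightarrow> set_mset Y \<subseteq> S \<Longrightarrow>
    (\<lambda>q. int (count X q) - int (count Y q)) = g \<Longrightarrow> fsum_eq G S X Y"
  unfolding fsum_eq_def by (auto intro: zspan.gen)

definition pushforward :: "('q \<Rightarrow> 'r) \<Rightarrow> ('q \<Rightarrow> int) \<Rightarrow> 'r \<Rightarrow> int" where
  "pushforward f d = (\<lambda>q'. if q' \<in> range f then d (inv f q') else 0)"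

lemma zspan_pushforward:
  assumes "d \<in> zspan G" "\<And>g. g \<in> G \<Longrightarrow> pushforward f g \<in> zspan G'"
  shows "pushforward f d \<in> zspan G'"
  using assms(1)
proof induction
  case zero
  then show ?case using zspan.zero by (simp add: pushforward_def if_distrib cong: if_cong)
next
  case (gen g)
  then show ?case by (rule assms(2))
next
  case (add x y)
  have "pushforward f (\<lambda>p. x p + y p) = (\<lambda>p. pushforward f x p + pushforward f y p)"
    by (simp add: pushforward_def fun_eq_iff)
  then show ?case using add zspan.add by metis
next
  case (neg x)
  have "pushforward f (\<lambda>p. - x p) = (\<lambda>p. - pushforward f x p)"
    by (simp add: pushforward_def fun_eq_iff)
  then show ?case using neg zspan.neg by metis
qed

lemma pushforward_ind_diff:
  "inj f \<Longrightarrow> pushforward f (\<lambda>q. ind a q - ind b q) = (\<lambda>q. ind (f a) q - ind (f b) q)"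
  by (auto simp: pushforward_def ind_def fun_eq_iff inj_eq)

lemma pushforward_ind_diff2:
  "inj f \<Longrightarrow> pushforward f (\<lambda>q. ind a q - ind b q - ind c q) =
    (\<lambda>q. ind (f a) q - ind (f b) q - ind (f c) q)"
  by (auto simp: pushforward_def ind_def fun_eq_iff inj_eq)

lemma count_image_mset_inj: "inj f \<Longrightarrow> count (image_mset f A) (f a) = count A a"
  by (induction A) (auto simp: inj_eq)

lemma count_diff_image_mset:
  assumes "inj f"
  shows "(\<lambda>q. int (count (image_mset f X) q) - int (count (image_mset f Y) q)) =
    pushforward f (\<lambda>q. int (count X q) - int (count Y q))"
proof
  fix q
  show "int (count (image_mset f X) q) - int (count (image_mset f Y) q) =
      pushforward f (\<lambda>q. int (count X q) - int (count Y q)) q"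
  proof (cases "q \<in> range f")
    case True
    then obtain a where "q = f a" by blast
    then show ?thesis using assms by (simp add: pushforward_def count_image_mset_inj)
  next
    case False
    then have "count (image_mset f X) q = 0" "count (image_mset f Y) q = 0"
      by (auto simp: count_eq_zero_iff)
    then show ?thesis using False by (simp add: pushforward_def)
  qed
qed

lemma fsum_eq_image_mset:
  assumes "fsum_eq G S X Y" "inj f" "f ` S \<subseteq> S'"
    and "\<And>g. g \<in> G \<Longrightarrow> pushforward f g \<in> zspan G'"
  shows "fsum_eq G' S' (image_mset f X) (image_mset f Y)"
proof -
  have "pushforward f (\<lambda>q. int (count X q) - int (count Y q)) \<in> zspan G'"
    using assms(1,4) unfolding fsum_eq_def by (blast intro: zspan_pushforward)
  then show ?thesis
    using assms(1,3) unfolding fsum_eq_def count_diff_image_mset[OF assms(2)] by auto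
qed

lemma teq2_refl: "set_mset X \<subseteq> SM \<times> SM \<Longrightarrow> teq2 SA SM addM l r X X"
  unfolding teq2_iff_fsum_eq by (rule fsum_eq_refl)

lemma teq2_sym: "teq2 SA SM addM l r X Y \<Longrightarrow> teq2 SA SM addM l r Y X"
  unfolding teq2_iff_fsum_eq by (rule fsum_eq_sym)

lemma teq2_trans:
  "teq2 SA SM addM l r X Y \<Longrightarrow> teq2 SA SM addM l r Y Z \<Longrightarrow> teq2 SA SM addM l r X Z"
  unfolding teq2_iff_fsum_eq by (rule fsum_eq_trans)

lemma teq2_add:
  "teq2 SA SM addM l r X Y \<Longrightarrow> teq2 SA SM addM l r X' Y' \<Longrightarrow>
    teq2 SA SM addM l r (X + X') (Y + Y')"
  unfolding teq2_iff_fsum_eq by (rule fsum_eq_add)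

lemma teq2_cancel: "teq2 SA SM addM l r (X + Z) (Y + Z) \<Longrightarrow> teq2 SA SM addM l r X Y"
  unfolding teq2_iff_fsum_eq by (rule fsum_eq_cancel)

lemma teq2_sum:
  "(\<And>t. t \<in> T \<Longrightarrow> teq2 SA SM addM l r (F t) (H t)) \<Longrightarrow>
    teq2 SA SM addM l r (sum F T) (sum H T)"
  unfolding teq2_iff_fsum_eq by (rule fsum_eq_sum)

lemma teq2_add_left:
  assumes "x \<in> SM" "x' \<in> SM" "y \<in> SM" "addM x x' \<in> SM"
  shows "teq2 SA SM addM l r {#(addM x x', y)#} ({#(x, y)#} + {#(x', y)#})"
  unfolding teq2_iff_fsum_eq
proof (rule fsum_eq_gen[where g = "\<lambda>q. ind (addM x x', y) q - ind (x, y) q - ind (x', y) q"])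
  show "(\<lambda>q. ind (addM x x', y) q - ind (x, y) q - ind (x', y) q) \<in> gens2 SA SM addM l r" unfolding gens2_def using assms by blast
qed (use assms in \<open>auto simp: ind_def fun_eq_iff\<close>)

lemma teq2_add_right:
  assumes "x \<in> SM" "y \<in> SM" "y' \<in> SM" "addM y y' \<in> SM"
  shows "teq2 SA SM addM l r {#(x, addM y y')#} ({#(x, y)#} + {#(x, y')#})"
  unfolding teq2_iff_fsum_eq
proof (rule fsum_eq_gen[where g = "\<lambda>q. ind (x, addM y y') q - ind (x, y) q - ind (x, y') q"])
  show "(\<lambda>q. ind (x, addM y y') q - ind (x, y) q - ind (x, y') q) \<in> gens2 SA SM addM l r" unfolding gens2_def using assms by blast
qed (use assms in \<open>auto simp: ind_def fun_eq_iff\<close>)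

lemma teq2_balanced:
  assumes "x \<in> SM" "a \<in> SA" "y \<in> SM" "r x a \<in> SM" "l a y \<in> SM"
  shows "teq2 SA SM addM l r {#(r x a, y)#} {#(x, l a y)#}"
  unfolding teq2_iff_fsum_eq
proof (rule fsum_eq_gen[where g = "\<lambda>q. ind (r x a, y) q - ind (x, l a y) q"])
  show "(\<lambda>q. ind (r x a, y) q - ind (x, l a y) q) \<in> gens2 SA SM addM l r" unfolding gens2_def using assms by blast
qed (use assms in \<open>auto simp: ind_def fun_eq_iff\<close>)

lemma teq3_tensor_right:
  assumes "teq2 SA SM addM l r X Y" "z \<in> SM"
  shows "teq3 SA SM addM l r (image_mset (\<lambda>(x, y). (x, y, z)) X) (image_mset (\<lambda>(x, y). (x, y, z)) Y)"
  unfolding teq3_iff_fsum_eq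
proof (rule fsum_eq_image_mset[OF assms(1)[unfolded teq2_iff_fsum_eq]])
  show inj: "inj (\<lambda>(x, y). (x, y, z))" by (auto simp: inj_def)
  note push = pushforward_ind_diff[OF inj] pushforward_ind_diff2[OF inj]
  show "(\<lambda>(x, y). (x, y, z)) ` (SM \<times> SM) \<subseteq> SM \<times> SM \<times> SM" using assms(2) by auto
  fix g assume "g \<in> gens2 SA SM addM l r"
  then have "pushforward (\<lambda>(x, y). (x, y, z)) g \<in> gens3 SA SM addM l r"
    unfolding gens2_def
  proof (elim UnE CollectE exE conjE)
    fix x x' y assume "g = (\<lambda>q. ind (addM x x', y) q - ind (x, y) q - ind (x', y) q)" "x \<in> SM" "x' \<in> SM" "y \<in> SM"
    then show ?thesis unfolding gens3_def using assms(2) by (simp only: push prod.case) blast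
  next
    fix x y y' assume "g = (\<lambda>q. ind (x, addM y y') q - ind (x, y) q - ind (x, y') q)" "x \<in> SM" "y \<in> SM" "y' \<in> SM"
    then show ?thesis unfolding gens3_def using assms(2) by (simp only: push prod.case) blast
  next
    fix x a y assume "g = (\<lambda>q. ind (r x a, y) q - ind (x, l a y) q)" "x \<in> SM" "a \<in> SA" "y \<in> SM"
    then show ?thesis unfolding gens3_def using assms(2) by (simp only: push prod.case) blast
  qed
  then show "pushforward (\<lambda>(x, y). (x, y, z)) g \<in> zspan (gens3 SA SM addM l r)" by (rule zspan.gen)
qed

lemma teq3_tensor_left:
  assumes "teq2 SA SM addM l r Y Z" "x \<in> SM"
  shows "teq3 SA SM addM l r (image_mset (\<lambda>(y, z). (x, y, z)) Y) (image_mset (\<lambda>(y, z). (x, y, z)) Z)"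
  unfolding teq3_iff_fsum_eq
proof (rule fsum_eq_image_mset[OF assms(1)[unfolded teq2_iff_fsum_eq]])
  show inj: "inj (\<lambda>(y, z). (x, y, z))" by (auto simp: inj_def)
  note push = pushforward_ind_diff[OF inj] pushforward_ind_diff2[OF inj]
  show "(\<lambda>(y, z). (x, y, z)) ` (SM \<times> SM) \<subseteq> SM \<times> SM \<times> SM" using assms(2) by auto
  fix g assume "g \<in> gens2 SA SM addM l r"
  then have "pushforward (\<lambda>(y, z). (x, y, z)) g \<in> gens3 SA SM addM l r"
    unfolding gens2_def
  proof (elim UnE CollectE exE conjE)
    fix y y' z assume "g = (\<lambda>q. ind (addM y y', z) q - ind (y, z) q - ind (y', z) q)" "y \<in> SM" "y' \<in> SM" "z \<in> SM"
    then show ?thesis unfolding gens3_def using assms(2) by (simp only: push prod.case) blast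
  next
    fix y z z' assume "g = (\<lambda>q. ind (y, addM z z') q - ind (y, z) q - ind (y, z') q)" "y \<in> SM" "z \<in> SM" "z' \<in> SM"
    then show ?thesis unfolding gens3_def using assms(2) by (simp only: push prod.case) blast
  next
    fix y a z assume "g = (\<lambda>q. ind (r y a, z) q - ind (y, l a z) q)" "y \<in> SM" "a \<in> SA" "z \<in> SM"
    then show ?thesis unfolding gens3_def using assms(2) by (simp only: push prod.case) blast
  qed
  then show "pushforward (\<lambda>(y, z). (x, y, z)) g \<in> zspan (gens3 SA SM addM l r)" by (rule zspan.gen)
qed

section \<open>Computing on representatives\<close>

type_synonym ('i, 'b) C_elem = "'i \<times> 'i \<Rightarrow> 'b set"
type_synonym ('i, 'b) C_tensor = "(('i, 'b) C_elem \<times> ('i, 'b) C_elem) multiset"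

locale ideal_family =
  fixes I :: "'i set" and J :: "'i \<Rightarrow> 'b::ring_1 set"
  assumes finite_index: "finite I" and ideal: "\<And>i. i \<in> I \<Longrightarrow> two_sided_ideal (J i)"
begin

abbreviation piA :: "('i \<Rightarrow> 'b) \<Rightarrow> 'i \<Rightarrow> 'b set" where
  "piA a \<equiv> (\<lambda>i\<in>I. cos (J i) (a i))"

abbreviation piC :: "('i \<times> 'i \<Rightarrow> 'b) \<Rightarrow> ('i, 'b) C_elem" where
  "piC f \<equiv> (\<lambda>p\<in>I \<times> I. cos (JJ J p) (f p))"

abbreviation J3 :: "'i \<Rightarrow> 'i \<Rightarrow> 'i \<Rightarrow> 'b set" where
  "J3 i n m \<equiv> isum (isum (J i) (J n)) (J m)"

lemma JJ_ideal: "p \<in> I \<times> I \<Longrightarrow> two_sided_ideal (JJ J p)"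
  by (cases p) (auto simp: JJ_def intro: two_sided_ideal_isum ideal)

lemma J3_ideal: "i \<in> I \<Longrightarrow> n \<in> I \<Longrightarrow> m \<in> I \<Longrightarrow> two_sided_ideal (J3 i n m)"
  by (auto intro: two_sided_ideal_isum ideal)

lemma J_subset_JJ:
  assumes "i \<in> I" "n \<in> I"
  shows "J i \<subseteq> JJ J (i, n)" "J n \<subseteq> JJ J (i, n)"
  using assms by (auto simp: JJ_def intro!: isum_upper1 isum_upper2 ideal)

lemma JJ_diag: "i \<in> I \<Longrightarrow> JJ J (i, i) = J i"
  by (simp add: JJ_def isum_idem ideal)

lemma JJ_subset_J3:
  assumes "i \<in> I" "n \<in> I" "m \<in> I"
  shows "JJ J (i, n) \<subseteq> J3 i n m" "JJ J (n, m) \<subseteq> J3 i n m" "JJ J (i, m) \<subseteq> J3 i n m"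
proof -
  have "J i \<subseteq> isum (J i) (J n)" "J n \<subseteq> isum (J i) (J n)"
    using J_subset_JJ[OF assms(1,2)] by (simp_all add: JJ_def)
  then show "JJ J (i, n) \<subseteq> J3 i n m" "JJ J (n, m) \<subseteq> J3 i n m" "JJ J (i, m) \<subseteq> J3 i n m"
    unfolding JJ_def fst_conv snd_conv
    by (simp_all add: isum_upper1 ideal assms(3) isum_mono)
qed

lemma piA_in: "piA a \<in> Acar I J"
  unfolding Acar_def qcar_def by (simp add: restrict_PiE_iff)

lemma piC_in: "piC f \<in> Ccar I J"
  unfolding Ccar_def qcar_def by (simp add: restrict_PiE_iff)

lemma piA_rep:
  assumes "a \<in> Acar I J"
  shows "piA (\<lambda>i. rep (a i)) = a"
proof
  fix i
  show "piA (\<lambda>i. rep (a i)) i = a i"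
    using assms PiE_mem[of a I _ i] PiE_arb[of a I _ i] cos_rep[OF ideal[of i]]
    unfolding Acar_def by (cases "i \<in> I") auto
qed

lemma piC_rep:
  assumes "x \<in> Ccar I J"
  shows "piC (\<lambda>p. rep (x p)) = x"
proof
  fix p
  show "piC (\<lambda>p. rep (x p)) p = x p"
    using assms PiE_mem[of x "I \<times> I" _ p] PiE_arb[of x "I \<times> I" _ p] cos_rep[OF JJ_ideal[of p]]
    unfolding Ccar_def by (cases "p \<in> I \<times> I") auto
qed

lemma Acar_ball_piA: "(\<And>a. P (piA a)) \<Longrightarrow> \<forall>x\<in>Acar I J. P x"
  using piA_rep by metis

lemma Ccar_ball_piC: "(\<And>f. P (piC f)) \<Longrightarrow> \<forall>x\<in>Ccar I J. P x"
  using piC_rep by metis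

lemma piA_eqI: "(\<And>i. i \<in> I \<Longrightarrow> cong_ideal (J i) (a i) (a' i)) \<Longrightarrow> piA a = piA a'"
  by (rule restrict_ext) (metis cos_eq_iff ideal)

lemma piC_eqI: "(\<And>p. p \<in> I \<times> I \<Longrightarrow> cong_ideal (JJ J p) (f p) (g p)) \<Longrightarrow> piC f = piC g"
  by (rule restrict_ext) (metis cos_eq_iff JJ_ideal)

lemma cong_rep_piA: "i \<in> I \<Longrightarrow> cong_ideal (J i) (rep (piA a i)) (a i)"
  using cong_rep_cos[OF ideal] by simp

lemma cong_rep_piC: "p \<in> I \<times> I \<Longrightarrow> cong_ideal (JJ J p) (rep (piC f p)) (f p)"
  using cong_rep_cos[OF JJ_ideal] by simp

lemma cong_rep_piC_diag: "i \<in> I \<Longrightarrow> cong_ideal (J i) (rep (piC f (i, i))) (f (i, i))"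
  using cong_rep_piC[of "(i, i)" f] JJ_diag by simp

lemma cong_rep_piC_J3:
  "i \<in> I \<Longrightarrow> n \<in> I \<Longrightarrow> m \<in> I \<Longrightarrow> cong_ideal (J3 i n m) (rep (piC f (i, m))) (f (i, m))"
  using cong_ideal_mono[OF cong_rep_piC JJ_subset_J3(3)] by simp

lemma cong_rep_qlift_piA:
  assumes p: "p \<in> I \<times> I" and t: "t = fst p \<or> t = snd p"
  shows "cong_ideal (JJ J p) (rep (qlift (JJ J p) (piA a t))) (a t)"
proof -
  have "t \<in> I" "J t \<subseteq> JJ J p" using assms J_subset_JJ[of "fst p" "snd p"] by auto
  then have "cong_ideal (JJ J p) (rep (piA a t)) (a t)"
    using cong_rep_piA cong_ideal_mono by blast
  moreover have "cong_ideal (JJ J p) (rep (qlift (JJ J p) (piA a t))) (rep (piA a t))"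
    unfolding qlift_def by (rule cong_rep_cos[OF JJ_ideal[OF p]])
  ultimately show ?thesis using cong_ideal_trans JJ_ideal[OF p] by blast
qed

lemma Aadd_rep: "Aadd I J a a' = piA (\<lambda>i. rep (a i) + rep (a' i))"
  by (simp add: Aadd_def qadd_def)

lemma Amul_rep: "Amul I J a a' = piA (\<lambda>i. rep (a i) * rep (a' i))"
  by (simp add: Amul_def qmul_def)

lemma Cadd_rep: "Cadd I J c c' = piC (\<lambda>p. rep (c p) + rep (c' p))"
  by (simp add: Cadd_def qadd_def)

lemma Cneg_rep: "Cneg I J c = piC (\<lambda>p. - rep (c p))"
  by (simp add: Cneg_def qneg_def)

lemma lact_rep: "lact I J a c = piC (\<lambda>p. rep (qlift (JJ J p) (a (fst p))) * rep (c p))"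
  by (simp add: lact_def qmul_def)

lemma ract_rep: "ract I J c a = piC (\<lambda>p. rep (c p) * rep (qlift (JJ J p) (a (snd p))))"
  by (simp add: ract_def qmul_def)

lemma Aadd_piA: "Aadd I J (piA a) (piA a') = piA (\<lambda>i. a i + a' i)"
  unfolding Aadd_rep by (rule piA_eqI) (intro cong_ideal_add cong_rep_piA ideal; assumption)

lemma Amul_piA: "Amul I J (piA a) (piA a') = piA (\<lambda>i. a i * a' i)"
  unfolding Amul_rep by (rule piA_eqI) (intro cong_ideal_mult cong_rep_piA ideal; assumption)

lemma Aone_piA: "Aone I J = piA (\<lambda>i. 1)"
  by (simp add: Aone_def)

lemma Cadd_piC: "Cadd I J (piC f) (piC g) = piC (\<lambda>p. f p + g p)"
  unfolding Cadd_rep by (rule piC_eqI) (intro cong_ideal_add cong_rep_piC JJ_ideal; assumption)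

lemma Cneg_piC: "Cneg I J (piC f) = piC (\<lambda>p. - f p)"
  unfolding Cneg_rep by (rule piC_eqI) (intro cong_ideal_uminus cong_rep_piC JJ_ideal; assumption)

lemma Czero_piC: "Czero I J = piC (\<lambda>p. 0)"
  by (simp add: Czero_def)

lemma lact_piC: "lact I J (piA a) (piC f) = piC (\<lambda>p. a (fst p) * f p)"
  unfolding lact_rep
  by (rule piC_eqI) (intro cong_ideal_mult JJ_ideal cong_rep_qlift_piA cong_rep_piC; simp)

lemma ract_piC: "ract I J (piC f) (piA a) = piC (\<lambda>p. f p * a (snd p))"
  unfolding ract_rep
  by (rule piC_eqI) (intro cong_ideal_mult JJ_ideal cong_rep_qlift_piA cong_rep_piC; simp)

lemma Cadd_in: "Cadd I J x y \<in> Ccar I J"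
  unfolding Cadd_rep by (rule piC_in)

lemma lact_in: "lact I J a x \<in> Ccar I J"
  unfolding lact_rep by (rule piC_in)

lemma ract_in: "ract I J x a \<in> Ccar I J"
  unfolding ract_rep by (rule piC_in)

lemma C_bimodule:
  "bimodule (Acar I J) (Aadd I J) (Amul I J) (Aone I J)
     (Ccar I J) (Cadd I J) (Czero I J) (Cneg I J) (lact I J) (ract I J)"
  unfolding bimodule_def
  by (intro conjI Acar_ball_piA Ccar_ball_piC ballI)
    (simp_all add: Czero_piC Cneg_piC piC_in Cadd_in lact_in ract_in Cadd_piC Aadd_piA Amul_piA
      Aone_piA lact_piC ract_piC algebra_simps)

lemma scalar_central:
  assumes "k_algebra sc" and x: "x \<in> Ccar I J"
  shows "lact I J (kA sc I J c) x = ract I J x (kA sc I J c)"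
proof -
  have "sc c 1 * y = y * sc c 1" for y
    using assms unfolding k_algebra_def by (metis mult_1_left mult_1_right)
  moreover have "kA sc I J c = piA (\<lambda>_. sc c 1)" by (simp add: kA_def)
  ultimately show ?thesis
    using Ccar_ball_piC[of "\<lambda>x. lact I J (kA sc I J c) x = ract I J x (kA sc I J c)"] x
    by (simp add: lact_piC ract_piC)
qed

section \<open>The tensor square of C\<close>

abbreviation teqC :: "('i, 'b) C_tensor \<Rightarrow> ('i, 'b) C_tensor \<Rightarrow> bool" where
  "teqC X Y \<equiv> teq2 (Acar I J) (Ccar I J) (Cadd I J) (lact I J) (ract I J) X Y"

lemmas [trans] = teq2_trans

lemma tensor_add_left:
  "x \<in> Ccar I J \<Longrightarrow> x' \<in> Ccar I J \<Longrightarrow> y \<in> Ccar I J \<Longrightarrow>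
    teqC {#(Cadd I J x x', y)#} ({#(x, y)#} + {#(x', y)#})"
  by (rule teq2_add_left) (simp_all add: Cadd_in)

lemma tensor_add_right:
  "x \<in> Ccar I J \<Longrightarrow> y \<in> Ccar I J \<Longrightarrow> y' \<in> Ccar I J \<Longrightarrow>
    teqC {#(x, Cadd I J y y')#} ({#(x, y)#} + {#(x, y')#})"
  by (rule teq2_add_right) (simp_all add: Cadd_in)

lemma tensor_balanced:
  "x \<in> Ccar I J \<Longrightarrow> a \<in> Acar I J \<Longrightarrow> y \<in> Ccar I J \<Longrightarrow>
    teqC {#(ract I J x a, y)#} {#(x, lact I J a y)#}"
  by (rule teq2_balanced) (simp_all add: lact_in ract_in)

lemma tensor_zero_left:
  assumes y: "y \<in> Ccar I J"
  shows "teqC {#(piC (\<lambda>_. 0), y)#} {#}"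
proof -
  have "teqC ({#} + {#(piC (\<lambda>_. 0), y)#}) ({#(piC (\<lambda>_. 0), y)#} + {#(piC (\<lambda>_. 0), y)#})"
    using tensor_add_left[OF piC_in piC_in y, of "\<lambda>_. 0" "\<lambda>_. 0"] by (simp add: Cadd_piC)
  then show ?thesis by (rule teq2_sym[OF teq2_cancel])
qed

lemma tensor_zero_right:
  assumes x: "x \<in> Ccar I J"
  shows "teqC {#(x, piC (\<lambda>_. 0))#} {#}"
proof -
  have "teqC ({#} + {#(x, piC (\<lambda>_. 0))#}) ({#(x, piC (\<lambda>_. 0))#} + {#(x, piC (\<lambda>_. 0))#})"
    using tensor_add_right[OF x piC_in piC_in, of "\<lambda>_. 0" "\<lambda>_. 0"] by (simp add: Cadd_piC)
  then show ?thesis by (rule teq2_sym[OF teq2_cancel])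
qed

lemma tensor_sum_left:
  assumes "finite T" "y \<in> Ccar I J"
  shows "teqC {#(piC (\<lambda>p. \<Sum>t\<in>T. f t p), y)#} (\<Sum>t\<in>T. {#(piC (f t), y)#})"
  using assms(1)
proof (induction T rule: finite_induct)
  case empty
  show ?case unfolding sum.empty by (rule tensor_zero_left[OF assms(2)])
next
  case (insert t T)
  have "piC (\<lambda>p. \<Sum>t\<in>insert t T. f t p) = Cadd I J (piC (f t)) (piC (\<lambda>p. \<Sum>t\<in>T. f t p))"
    by (simp only: Cadd_piC sum.insert[OF insert.hyps])
  then have "teqC {#(piC (\<lambda>p. \<Sum>t\<in>insert t T. f t p), y)#}
      ({#(piC (f t), y)#} + {#(piC (\<lambda>p. \<Sum>t\<in>T. f t p), y)#})"
    using tensor_add_left[OF piC_in piC_in assms(2)] by (simp only:)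
  also have "teqC \<dots> ({#(piC (f t), y)#} + (\<Sum>t\<in>T. {#(piC (f t), y)#}))"
    by (rule teq2_add[OF teq2_refl insert.IH]) (simp add: piC_in assms(2))
  finally show ?case by (simp only: sum.insert[OF insert.hyps])
qed

lemma tensor_sum_right:
  assumes "finite T" "x \<in> Ccar I J"
  shows "teqC {#(x, piC (\<lambda>p. \<Sum>t\<in>T. f t p))#} (\<Sum>t\<in>T. {#(x, piC (f t))#})"
  using assms(1)
proof (induction T rule: finite_induct)
  case empty
  show ?case unfolding sum.empty by (rule tensor_zero_right[OF assms(2)])
next
  case (insert t T)
  have "piC (\<lambda>p. \<Sum>t\<in>insert t T. f t p) = Cadd I J (piC (f t)) (piC (\<lambda>p. \<Sum>t\<in>T. f t p))"
    by (simp only: Cadd_piC sum.insert[OF insert.hyps])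
  then have "teqC {#(x, piC (\<lambda>p. \<Sum>t\<in>insert t T. f t p))#}
      ({#(x, piC (f t))#} + {#(x, piC (\<lambda>p. \<Sum>t\<in>T. f t p))#})"
    using tensor_add_right[OF assms(2) piC_in piC_in] by (simp only:)
  also have "teqC \<dots> ({#(x, piC (f t))#} + (\<Sum>t\<in>T. {#(x, piC (f t))#}))"
    by (rule teq2_add[OF teq2_refl insert.IH]) (simp add: piC_in assms(2))
  finally show ?case by (simp only: sum.insert[OF insert.hyps])
qed

definition entry :: "'i \<Rightarrow> 'i \<Rightarrow> 'b \<Rightarrow> ('i, 'b) C_elem" where
  "entry i n z = piC (\<lambda>p. if p = (i, n) then z else 0)"

lemma entry_in: "entry i n z \<in> Ccar I J"
  unfolding entry_def by (rule piC_in)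

lemma entry_zero: "entry i n 0 = piC (\<lambda>_. 0)"
  unfolding entry_def by simp

lemma entry_add: "entry i n (u + v) = Cadd I J (entry i n u) (entry i n v)"
  unfolding entry_def Cadd_piC by (rule arg_cong[where f = piC]) auto

lemma tensor_entry_balance:
  assumes "i \<in> I" "n \<in> I" "n' \<in> I" "m \<in> I"
  shows "teqC {#(entry i n a, entry n' m b)#} {#(entry i n 1, entry n' m (if n' = n then a * b else 0))#}"
proof -
  define \<alpha> where "\<alpha> = piA (\<lambda>t. if t = n then a else 0)"
  have "teqC {#(ract I J (entry i n 1) \<alpha>, entry n' m b)#} {#(entry i n 1, lact I J \<alpha> (entry n' m b))#}"
    unfolding \<alpha>_def by (rule tensor_balanced[OF entry_in piA_in entry_in])
  moreover have "ract I J (entry i n 1) \<alpha> = entry i n a"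
    unfolding \<alpha>_def entry_def ract_piC by (rule arg_cong[where f = piC]) auto
  moreover have "lact I J \<alpha> (entry n' m b) = entry n' m (if n' = n then a * b else 0)"
    unfolding \<alpha>_def entry_def lact_piC by (rule arg_cong[where f = piC]) auto
  ultimately show ?thesis by simp
qed

lemma tensor_entry_annihilate:
  assumes i: "i \<in> I" and n: "n \<in> I" and a: "a \<in> J i"
  shows "teqC {#(entry i n 1, entry n m a)#} {#}"
proof -
  define \<alpha> where "\<alpha> = piA (\<lambda>t. if t = n then a else 0)"
  have "teqC {#(ract I J (entry i n 1) \<alpha>, entry n m 1)#} {#(entry i n 1, lact I J \<alpha> (entry n m 1))#}"
    unfolding \<alpha>_def by (rule tensor_balanced[OF entry_in piA_in entry_in])
  moreover have "lact I J \<alpha> (entry n m 1) = entry n m a"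
    unfolding \<alpha>_def entry_def lact_piC by (rule arg_cong[where f = piC]) auto
  moreover have "ract I J (entry i n 1) \<alpha> = piC (\<lambda>_. 0)"
    unfolding \<alpha>_def entry_def ract_piC
  proof (rule piC_eqI)
    fix p assume p: "p \<in> I \<times> I"
    have "a \<in> JJ J (i, n)" using J_subset_JJ(1)[OF i n] a by auto
    then show "cong_ideal (JJ J p) ((if p = (i, n) then 1 else 0) * (if snd p = n then a else 0)) 0"
      using two_sided_ideal_zero[OF JJ_ideal[OF p]] by (auto simp: cong_ideal_def)
  qed
  ultimately have "teqC {#(piC (\<lambda>_. 0), entry n m 1)#} {#(entry i n 1, entry n m a)#}"
    by simp
  then show ?thesis
    using tensor_zero_left[OF entry_in] teq2_sym teq2_trans by blast
qed

text \<open>Write \<open>z - z' = a + b + c\<close> with \<open>a \<in> J\<^sub>i\<close>, \<open>b \<in> J\<^sub>n\<close>, \<open>c \<in> J\<^sub>m\<close>: \<open>b + c\<close> vanishes in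
  \<open>B\<^sub>n\<^sub>m\<close>, and \<open>a\<close> is annihilated by \<open>entry i n 1\<close>.\<close>

lemma tensor_entry_cong:
  assumes i: "i \<in> I" and n: "n \<in> I" and zz': "cong_ideal (J3 i n m) z z'"
  shows "teqC {#(entry i n 1, entry n m z)#} {#(entry i n 1, entry n m z')#}"
proof -
  from zz' obtain a b c where abc: "z - z' = (a + b) + c" "a \<in> J i" "b \<in> J n" "c \<in> J m"
    unfolding cong_ideal_def isum_def by blast
  have "entry n m z = entry n m (z' + a)"
    unfolding entry_def
  proof (rule piC_eqI)
    fix p assume p: "p \<in> I \<times> I"
    have "z - (z' + a) = b + c" using abc(1) by (simp add: algebra_simps)
    then have "z - (z' + a) \<in> JJ J (n, m)" unfolding JJ_def isum_def using abc by auto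
    then show "cong_ideal (JJ J p) (if p = (n, m) then z else 0) (if p = (n, m) then z' + a else 0)"
      using two_sided_ideal_zero[OF JJ_ideal[OF p]] by (simp add: cong_ideal_def)
  qed
  then have "teqC {#(entry i n 1, entry n m z)#}
      ({#(entry i n 1, entry n m z')#} + {#(entry i n 1, entry n m a)#})"
    using tensor_add_right[OF entry_in entry_in entry_in] by (simp add: entry_add)
  also have "teqC \<dots> ({#(entry i n 1, entry n m z')#} + {#})"
    by (intro teq2_add teq2_refl tensor_entry_annihilate i n abc(2)) (simp add: entry_in)
  finally show ?thesis by simp
qed

lemma tensor_expand_left:
  assumes x: "x \<in> Ccar I J" and y: "y \<in> Ccar I J"
  shows "teqC {#(x, y)#} (\<Sum>t\<in>I \<times> I. {#(entry (fst t) (snd t) (rep (x t)), y)#})"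
proof -
  define f where "f = (\<lambda>t p. if p = t then rep (x t) else (0::'b))"
  have "piC (\<lambda>p. \<Sum>t\<in>I \<times> I. f t p) = x"
    by (subst piC_rep[OF x, symmetric], rule restrict_ext) (simp add: f_def finite_index)
  moreover have "piC (f t) = entry (fst t) (snd t) (rep (x t))" for t
    by (simp add: entry_def f_def)
  ultimately show ?thesis
    using tensor_sum_left[OF finite_cartesian_product[OF finite_index finite_index] y, of f] by simp
qed

lemma tensor_expand_right:
  assumes x: "x \<in> Ccar I J" and y: "y \<in> Ccar I J"
  shows "teqC {#(x, y)#} (\<Sum>t\<in>I \<times> I. {#(x, entry (fst t) (snd t) (rep (y t)))#})"
proof -
  define f where "f = (\<lambda>t p. if p = t then rep (y t) else (0::'b))"
  have "piC (\<lambda>p. \<Sum>t\<in>I \<times> I. f t p) = y"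
    by (subst piC_rep[OF y, symmetric], rule restrict_ext) (simp add: f_def finite_index)
  moreover have "piC (f t) = entry (fst t) (snd t) (rep (y t))" for t
    by (simp add: entry_def f_def)
  ultimately show ?thesis
    using tensor_sum_right[OF finite_cartesian_product[OF finite_index finite_index] x, of f] by simp
qed

lemma tensor_entry_normal_form:
  assumes i: "i \<in> I" and n: "n \<in> I" and y: "y \<in> Ccar I J"
  shows "teqC {#(entry i n a, y)#} (\<Sum>m\<in>I. {#(entry i n 1, entry n m (a * rep (y (n, m))))#})"
proof -
  have "teqC {#(entry i n a, y)#} (\<Sum>s\<in>I \<times> I. {#(entry i n a, entry (fst s) (snd s) (rep (y s)))#})"
    by (rule tensor_expand_right[OF entry_in y])
  also have "teqC \<dots> (\<Sum>s\<in>I \<times> I. if fst s = n then {#(entry i n 1, entry n (snd s) (a * rep (y s)))#} else {#})"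
  proof (rule teq2_sum)
    fix s assume s: "s \<in> I \<times> I"
    have "teqC {#(entry i n a, entry (fst s) (snd s) (rep (y s)))#}
        {#(entry i n 1, entry (fst s) (snd s) (if fst s = n then a * rep (y s) else 0))#}"
      using i n s by (intro tensor_entry_balance) auto
    then show "teqC {#(entry i n a, entry (fst s) (snd s) (rep (y s)))#}
        (if fst s = n then {#(entry i n 1, entry n (snd s) (a * rep (y s)))#} else {#})"
      using teq2_trans[OF _ tensor_zero_right[OF entry_in]] by (cases "fst s = n") (simp_all add: entry_zero)
  qed
  also have "(\<Sum>s\<in>I \<times> I. if fst s = n then {#(entry i n 1, entry n (snd s) (a * rep (y s)))#} else {#})
      = (\<Sum>m\<in>I. {#(entry i n 1, entry n m (a * rep (y (n, m))))#})"
    using sum_if_fst_eq[OF finite_index finite_index n,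
        of "\<lambda>s. {#(entry i n 1, entry n (snd s) (a * rep (y s)))#}"] by simp
  finally show ?thesis .
qed

definition contraction :: "('i, 'b) C_tensor \<Rightarrow> 'i \<Rightarrow> 'i \<Rightarrow> 'i \<Rightarrow> 'b" where
  "contraction X i n m = (\<Sum>(x, y)\<in>#X. rep (x (i, n)) * rep (y (n, m)))"

definition normal_form :: "('i, 'b) C_tensor \<Rightarrow> ('i, 'b) C_tensor" where
  "normal_form X =
    (\<Sum>t\<in>I \<times> I. \<Sum>m\<in>I. {#(entry (fst t) (snd t) 1, entry (snd t) m (contraction X (fst t) (snd t) m))#})"

lemma contraction_empty: "contraction {#} i n m = 0"
  by (simp add: contraction_def)

lemma contraction_add: "contraction (X + Y) i n m = contraction X i n m + contraction Y i n m"
  by (simp add: contraction_def)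

lemma contraction_single: "contraction {#(x, y)#} i n m = rep (x (i, n)) * rep (y (n, m))"
  by (simp add: contraction_def)

lemma normal_form_empty: "teqC (normal_form {#}) {#}"
proof -
  have "teqC (normal_form {#}) (\<Sum>t\<in>I \<times> I. \<Sum>m\<in>I. {#})"
    unfolding normal_form_def contraction_empty entry_zero by (intro teq2_sum tensor_zero_right entry_in)
  then show ?thesis by simp
qed

lemma normal_form_add: "teqC (normal_form (X + Y)) (normal_form X + normal_form Y)"
  unfolding normal_form_def contraction_add entry_add sum.distrib[symmetric]
  by (intro teq2_sum tensor_add_right entry_in)

lemma tensor_eq_normal_form_single:
  assumes x: "x \<in> Ccar I J" and y: "y \<in> Ccar I J"
  shows "teqC {#(x, y)#} (normal_form {#(x, y)#})"
proof -
  have "teqC {#(x, y)#} (\<Sum>t\<in>I \<times> I. {#(entry (fst t) (snd t) (rep (x t)), y)#})"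
    by (rule tensor_expand_left[OF x y])
  also have "teqC \<dots> (\<Sum>t\<in>I \<times> I. \<Sum>m\<in>I.
      {#(entry (fst t) (snd t) 1, entry (snd t) m (rep (x t) * rep (y (snd t, m))))#})"
    using y by (intro teq2_sum tensor_entry_normal_form) auto
  finally show ?thesis unfolding normal_form_def contraction_single by simp
qed

lemma tensor_eq_normal_form: "set_mset X \<subseteq> Ccar I J \<times> Ccar I J \<Longrightarrow> teqC X (normal_form X)"
proof (induction X)
  case empty
  then show ?case using teq2_sym[OF normal_form_empty] by simp
next
  case (add a X)
  obtain x y where a: "a = (x, y)" "x \<in> Ccar I J" "y \<in> Ccar I J" using add.prems by (cases a) auto
  have "teqC (X + {#a#}) (normal_form X + normal_form {#a#})"
    unfolding a(1) using add by (intro teq2_add tensor_eq_normal_form_single a) auto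
  also have "teqC \<dots> (normal_form (X + {#a#}))" by (rule teq2_sym[OF normal_form_add])
  finally show ?case by simp
qed

text \<open>In fact \<open>X \<mapsto> (contraction X i n m)\<^sub>i\<^sub>,\<^sub>n\<^sub>,\<^sub>m\<close> induces an isomorphism
  \<open>C \<otimes>\<^sub>A C \<cong> \<Oplus>\<^sub>i\<^sub>,\<^sub>n\<^sub>,\<^sub>m B/(J\<^sub>i + J\<^sub>n + J\<^sub>m)\<close>; this lemma is its injectivity.\<close>

lemma teqC_contractionI:
  assumes "set_mset X \<subseteq> Ccar I J \<times> Ccar I J" "set_mset Y \<subseteq> Ccar I J \<times> Ccar I J"
    and "\<And>i n m. i \<in> I \<Longrightarrow> n \<in> I \<Longrightarrow> m \<in> I \<Longrightarrow>
      cong_ideal (J3 i n m) (contraction X i n m) (contraction Y i n m)"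
  shows "teqC X Y"
proof -
  have "teqC (normal_form X) (normal_form Y)"
    unfolding normal_form_def by (intro teq2_sum tensor_entry_cong assms(3)) auto
  then show ?thesis
    using tensor_eq_normal_form[OF assms(1)] teq2_sym[OF tensor_eq_normal_form[OF assms(2)]] teq2_trans
    by blast
qed

section \<open>The coproduct and the counit\<close>

declare restrict_apply[simp del] \<comment> \<open>keeps \<open>piC f p\<close> folded, the form \<open>cong_rep_piC\<close> applies to\<close>

lemma contraction_piC_image:
  assumes "i \<in> I" "n \<in> I" "m \<in> I"
  shows "cong_ideal (J3 i n m) (contraction (image_mset (\<lambda>k. (piC (F k), piC (G k))) (mset_set I)) i n m)
    (\<Sum>k\<in>I. F k (i, n) * G k (n, m))"
proof -
  have "contraction (image_mset (\<lambda>k. (piC (F k), piC (G k))) (mset_set I)) i n m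
      = (\<Sum>k\<in>I. rep (piC (F k) (i, n)) * rep (piC (G k) (n, m)))"
    unfolding contraction_def by (simp add: sum_unfold_sum_mset image_mset.compositionality comp_def)
  also have "cong_ideal (J3 i n m) \<dots> (\<Sum>k\<in>I. F k (i, n) * G k (n, m))"
    by (intro cong_ideal_sum cong_ideal_mult J3_ideal assms cong_ideal_mono[OF cong_rep_piC] JJ_subset_J3)
      (use assms in auto)
  finally show ?thesis .
qed

lemma DeltaF_piC:
  "DeltaF I J b = image_mset (\<lambda>k. (piC (\<lambda>p. b (fst p, k)), piC (\<lambda>p. if k = snd p then 1 else 0))) (mset_set I)"
  by (simp add: DeltaF_def)

lemma DeltaF'_piC:
  "DeltaF' I J b = image_mset (\<lambda>k. (piC (\<lambda>p. if fst p = k then 1 else 0), piC (\<lambda>p. b (k, snd p)))) (mset_set I)"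
  by (simp add: DeltaF'_def)

lemma DeltaC_piC:
  "DeltaC I J c = image_mset (\<lambda>k. (piC (\<lambda>p. rep (c (fst p, k))), piC (\<lambda>p. if k = snd p then 1 else 0))) (mset_set I)"
  by (simp add: DeltaC_def DeltaF_def)

lemma set_DeltaF: "set_mset (DeltaF I J b) \<subseteq> Ccar I J \<times> Ccar I J"
  unfolding DeltaF_piC by (auto simp: piC_in)

lemma set_DeltaF': "set_mset (DeltaF' I J b) \<subseteq> Ccar I J \<times> Ccar I J"
  unfolding DeltaF'_piC by (auto simp: piC_in)

lemma set_DeltaC: "set_mset (DeltaC I J c) \<subseteq> Ccar I J \<times> Ccar I J"
  unfolding DeltaC_def by (rule set_DeltaF)

lemma contraction_DeltaF:
  assumes "i \<in> I" "n \<in> I" "m \<in> I"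
  shows "cong_ideal (J3 i n m) (contraction (DeltaF I J b) i n m) (b (i, m))"
  using contraction_piC_image[OF assms, of "\<lambda>k p. b (fst p, k)" "\<lambda>k p. if k = snd p then 1 else 0"]
    assms finite_index
  by (simp add: DeltaF_piC sum_mult_delta_right)

lemma contraction_DeltaF':
  assumes "i \<in> I" "n \<in> I" "m \<in> I"
  shows "cong_ideal (J3 i n m) (contraction (DeltaF' I J b) i n m) (b (i, m))"
  using contraction_piC_image[OF assms, of "\<lambda>k p. if fst p = k then 1 else 0" "\<lambda>k p. b (k, snd p)"]
    assms finite_index
  by (simp add: DeltaF'_piC sum_mult_delta_left)

lemma contraction_DeltaC_piC:
  assumes "i \<in> I" "n \<in> I" "m \<in> I"
  shows "cong_ideal (J3 i n m) (contraction (DeltaC I J (piC f)) i n m) (f (i, m))"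
proof -
  have "cong_ideal (J3 i n m) (contraction (DeltaF I J (\<lambda>p. rep (piC f p))) i n m) (rep (piC f (i, m)))"
    by (rule contraction_DeltaF[OF assms])
  then show ?thesis
    unfolding DeltaC_def using cong_ideal_trans[OF J3_ideal[OF assms] _ cong_rep_piC_J3[OF assms]] by blast
qed

lemma DeltaF_cong:
  assumes "\<forall>i\<in>I. \<forall>j\<in>I. cos (JJ J (i, j)) (b (i, j)) = cos (JJ J (i, j)) (b' (i, j))"
  shows "teqC (DeltaF I J b) (DeltaF I J b')"
proof (rule teqC_contractionI[OF set_DeltaF set_DeltaF])
  fix i n m assume inm: "i \<in> I" "n \<in> I" "m \<in> I"
  then have "cos (JJ J (i, m)) (b (i, m)) = cos (JJ J (i, m)) (b' (i, m))"
    using assms by blast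
  then have "cong_ideal (JJ J (i, m)) (b (i, m)) (b' (i, m))"
    using cos_eq_iff[OF JJ_ideal[of "(i, m)"]] inm by simp
  then have "cong_ideal (J3 i n m) (b (i, m)) (b' (i, m))"
    using JJ_subset_J3(3)[OF inm] by (rule cong_ideal_mono)
  then show "cong_ideal (J3 i n m) (contraction (DeltaF I J b) i n m) (contraction (DeltaF I J b') i n m)"
    using contraction_DeltaF[OF inm] J3_ideal[OF inm] cong_ideal_trans cong_ideal_common by meson
qed

lemma epsF_cong:
  assumes "\<forall>i\<in>I. \<forall>j\<in>I. cos (JJ J (i, j)) (b (i, j)) = cos (JJ J (i, j)) (b' (i, j))"
  shows "epsF I J b = epsF I J b'"
  unfolding epsF_def
proof (rule restrict_ext)
  fix i assume i: "i \<in> I"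
  then have "cos (JJ J (i, i)) (b (i, i)) = cos (JJ J (i, i)) (b' (i, i))" using assms by blast
  then show "cos (J i) (b (i, i)) = cos (J i) (b' (i, i))" using JJ_diag[OF i] by simp
qed

lemma DeltaF_teqC_DeltaF': "teqC (DeltaF I J b) (DeltaF' I J b)"
  by (rule teqC_contractionI[OF set_DeltaF set_DeltaF'])
    (meson cong_ideal_common J3_ideal contraction_DeltaF contraction_DeltaF')

lemma DeltaC_add:
  assumes c: "c \<in> Ccar I J" and c': "c' \<in> Ccar I J"
  shows "teqC (DeltaC I J (Cadd I J c c')) (DeltaC I J c + DeltaC I J c')"
proof (rule teqC_contractionI)
  fix i n m assume inm: "i \<in> I" "n \<in> I" "m \<in> I"
  show "cong_ideal (J3 i n m) (contraction (DeltaC I J (Cadd I J c c')) i n m)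
      (contraction (DeltaC I J c + DeltaC I J c') i n m)"
    unfolding contraction_add Cadd_rep DeltaC_def
    by (rule cong_ideal_common[OF J3_ideal[OF inm] contraction_DeltaC_piC[OF inm, unfolded DeltaC_def]
          cong_ideal_add[OF J3_ideal[OF inm] contraction_DeltaF[OF inm] contraction_DeltaF[OF inm]]])
qed (use set_DeltaC in auto)

lemma DeltaC_bimodule_hom:
  assumes a: "a \<in> Acar I J" and a': "a' \<in> Acar I J" and c: "c \<in> Ccar I J"
  shows "teqC (DeltaC I J (lact I J a (ract I J c a')))
    (image_mset (\<lambda>(x, y). (lact I J a x, ract I J y a')) (DeltaC I J c))"
proof -
  obtain \<alpha> \<beta> where ab: "a = piA \<alpha>" "a' = piA \<beta>"
    using piA_rep[OF a] piA_rep[OF a'] by metis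
  have "lact I J a (ract I J c a') = piC (\<lambda>p. \<alpha> (fst p) * (rep (c p) * \<beta> (snd p)))"
    unfolding ab by (subst piC_rep[OF c, symmetric]) (simp add: lact_piC ract_piC)
  moreover have "image_mset (\<lambda>(x, y). (lact I J a x, ract I J y a')) (DeltaC I J c)
     = image_mset (\<lambda>k. (piC (\<lambda>p. \<alpha> (fst p) * rep (c (fst p, k))),
         piC (\<lambda>p. (if k = snd p then 1 else 0) * \<beta> (snd p)))) (mset_set I)"
    unfolding DeltaC_piC ab by (simp add: image_mset.compositionality comp_def lact_piC ract_piC)
  moreover have "teqC (DeltaC I J (piC (\<lambda>p. \<alpha> (fst p) * (rep (c p) * \<beta> (snd p)))))
    (image_mset (\<lambda>k. (piC (\<lambda>p. \<alpha> (fst p) * rep (c (fst p, k))),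
         piC (\<lambda>p. (if k = snd p then 1 else 0) * \<beta> (snd p)))) (mset_set I))"
  proof (rule teqC_contractionI[OF set_DeltaC])
    fix i n m assume inm: "i \<in> I" "n \<in> I" "m \<in> I"
    have "cong_ideal (J3 i n m) (contraction (image_mset (\<lambda>k. (piC (\<lambda>p. \<alpha> (fst p) * rep (c (fst p, k))),
         piC (\<lambda>p. (if k = snd p then 1 else 0) * \<beta> (snd p)))) (mset_set I)) i n m)
      (\<alpha> i * (rep (c (i, m)) * \<beta> m))"
      using contraction_piC_image[OF inm, of "\<lambda>k p. \<alpha> (fst p) * rep (c (fst p, k))"
          "\<lambda>k p. (if k = snd p then 1 else 0) * \<beta> (snd p)"] inm finite_index
      by (simp add: of_bool_def[symmetric] mult.assoc[symmetric] sum_distrib_right[symmetric])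
    then show "cong_ideal (J3 i n m) (contraction (DeltaC I J (piC (\<lambda>p. \<alpha> (fst p) * (rep (c p) * \<beta> (snd p))))) i n m)
      (contraction (image_mset (\<lambda>k. (piC (\<lambda>p. \<alpha> (fst p) * rep (c (fst p, k))),
         piC (\<lambda>p. (if k = snd p then 1 else 0) * \<beta> (snd p)))) (mset_set I)) i n m)"
      using cong_ideal_common[OF J3_ideal[OF inm] contraction_DeltaC_piC[OF inm]] by simp
  qed (auto simp: piC_in)
  ultimately show ?thesis by simp
qed

lemma epsC_piA: "epsC I J c = piA (\<lambda>i. rep (c (i, i)))"
  by (simp add: epsC_def epsF_def)

lemma lact_epsC_piC: "lact I J (epsC I J (piC f)) (piC g) = piC (\<lambda>p. rep (piC f (fst p, fst p)) * g p)"
  by (simp add: epsC_piA lact_piC)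

lemma ract_epsC_piC: "ract I J (piC f) (epsC I J (piC g)) = piC (\<lambda>p. f p * rep (piC g (snd p, snd p)))"
  by (simp add: epsC_piA ract_piC)

lemma epsC_in: "epsC I J c \<in> Acar I J"
  unfolding epsC_piA by (rule piA_in)

lemma epsC_add: "epsC I J (Cadd I J c c') = Aadd I J (epsC I J c) (epsC I J c')"
  unfolding epsC_piA Aadd_piA Cadd_rep by (intro piA_eqI cong_rep_piC_diag)

lemma epsC_bimodule_hom:
  assumes a: "a \<in> Acar I J" and a': "a' \<in> Acar I J" and c: "c \<in> Ccar I J"
  shows "epsC I J (lact I J a (ract I J c a')) = Amul I J a (Amul I J (epsC I J c) a')"
proof -
  obtain \<alpha> \<beta> where ab: "a = piA \<alpha>" "a' = piA \<beta>"
    using piA_rep[OF a] piA_rep[OF a'] by metis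
  have lr: "lact I J a (ract I J c a') = piC (\<lambda>p. \<alpha> (fst p) * (rep (c p) * \<beta> (snd p)))"
    unfolding ab by (subst piC_rep[OF c, symmetric]) (simp add: lact_piC ract_piC)
  show ?thesis
    unfolding lr unfolding ab epsC_piA Amul_piA
  proof (intro piA_eqI)
    fix i assume i: "i \<in> I"
    show "cong_ideal (J i) (rep (piC (\<lambda>p. \<alpha> (fst p) * (rep (c p) * \<beta> (snd p))) (i, i)))
        (\<alpha> i * (rep (c (i, i)) * \<beta> i))"
      using cong_rep_piC_diag[OF i, of "\<lambda>p. \<alpha> (fst p) * (rep (c p) * \<beta> (snd p))"] by simp
  qed
qed

lemma DeltaC_piC_fst:
  "teqC (DeltaC I J (piC (\<lambda>p. g (fst p)))) {#(piC (\<lambda>p. g (fst p)), piC (\<lambda>_. 1))#}"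
proof (rule teqC_contractionI)
  fix i n m assume inm: "i \<in> I" "n \<in> I" "m \<in> I"
  have "cong_ideal (J3 i n m) (rep (piC (\<lambda>p. g (fst p)) (i, n))) (g i)"
    using cong_ideal_mono[OF cong_rep_piC[of "(i, n)" "\<lambda>p. g (fst p)"] JJ_subset_J3(1)[OF inm]] inm by simp
  moreover have "cong_ideal (J3 i n m) (rep (piC (\<lambda>_. 1) (n, m))) 1"
    using cong_ideal_mono[OF cong_rep_piC JJ_subset_J3(2)[OF inm]] inm by simp
  ultimately have "cong_ideal (J3 i n m) (contraction {#(piC (\<lambda>p. g (fst p)), piC (\<lambda>_. 1))#} i n m) (g i)"
    unfolding contraction_single using cong_ideal_mult[OF J3_ideal[OF inm]] by fastforce
  then show "cong_ideal (J3 i n m) (contraction (DeltaC I J (piC (\<lambda>p. g (fst p)))) i n m)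
      (contraction {#(piC (\<lambda>p. g (fst p)), piC (\<lambda>_. 1))#} i n m)"
    using cong_ideal_common[OF J3_ideal[OF inm] contraction_DeltaC_piC[OF inm]] by simp
qed (auto simp: set_DeltaC piC_in)

lemma DeltaC_piC_snd:
  "teqC (DeltaC I J (piC (\<lambda>p. g (snd p)))) {#(piC (\<lambda>_. 1), piC (\<lambda>p. g (snd p)))#}"
proof (rule teqC_contractionI)
  fix i n m assume inm: "i \<in> I" "n \<in> I" "m \<in> I"
  have "cong_ideal (J3 i n m) (rep (piC (\<lambda>_. 1) (i, n))) 1"
    using cong_ideal_mono[OF cong_rep_piC JJ_subset_J3(1)[OF inm]] inm by simp
  moreover have "cong_ideal (J3 i n m) (rep (piC (\<lambda>p. g (snd p)) (n, m))) (g m)"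
    using cong_ideal_mono[OF cong_rep_piC[of "(n, m)" "\<lambda>p. g (snd p)"] JJ_subset_J3(2)[OF inm]] inm by simp
  ultimately have "cong_ideal (J3 i n m) (contraction {#(piC (\<lambda>_. 1), piC (\<lambda>p. g (snd p)))#} i n m) (g m)"
    unfolding contraction_single using cong_ideal_mult[OF J3_ideal[OF inm]] by fastforce
  then show "cong_ideal (J3 i n m) (contraction (DeltaC I J (piC (\<lambda>p. g (snd p)))) i n m)
      (contraction {#(piC (\<lambda>_. 1), piC (\<lambda>p. g (snd p)))#} i n m)"
    using cong_ideal_common[OF J3_ideal[OF inm] contraction_DeltaC_piC[OF inm]] by simp
qed (auto simp: set_DeltaC piC_in)

text \<open>Both iterated coproducts of \<open>c\<close> reduce to \<open>\<Sum>\<^sub>k a\<^sub>k \<otimes> 1 \<otimes> e\<^sub>k\<close>, where \<open>\<Delta> c = \<Sum>\<^sub>k a\<^sub>k \<otimes> e\<^sub>k\<close>: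
  \<open>a\<^sub>k\<close> only depends on the row index and \<open>e\<^sub>k\<close> only on the column index.\<close>

lemma DeltaC_coassoc:
  assumes c: "c \<in> Ccar I J"
  shows "teq3 (Acar I J) (Ccar I J) (Cadd I J) (lact I J) (ract I J)
    (\<Sum>(x, y)\<in>#DeltaC I J c. image_mset (\<lambda>(u, v). (u, v, y)) (DeltaC I J x))
    (\<Sum>(x, y)\<in>#DeltaC I J c. image_mset (\<lambda>(u, v). (x, u, v)) (DeltaC I J y))"
proof -
  define a where "a = (\<lambda>k. piC (\<lambda>p. rep (c (fst p, k))))"
  define e where "e = (\<lambda>k. piC (\<lambda>p. if k = snd p then (1::'b) else 0))"
  have DC: "DeltaC I J c = image_mset (\<lambda>k. (a k, e k)) (mset_set I)"
    unfolding DeltaC_piC a_def e_def ..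
  have L: "(\<Sum>(x, y)\<in>#DeltaC I J c. image_mset (\<lambda>(u, v). (u, v, y)) (DeltaC I J x))
      = (\<Sum>k\<in>I. image_mset (\<lambda>(u, v). (u, v, e k)) (DeltaC I J (a k)))"
    unfolding DC by (simp add: image_mset.compositionality comp_def sum_unfold_sum_mset)
  have R: "(\<Sum>(x, y)\<in>#DeltaC I J c. image_mset (\<lambda>(u, v). (x, u, v)) (DeltaC I J y))
      = (\<Sum>k\<in>I. image_mset (\<lambda>(u, v). (a k, u, v)) (DeltaC I J (e k)))"
    unfolding DC by (simp add: image_mset.compositionality comp_def sum_unfold_sum_mset)
  have "teq3 (Acar I J) (Ccar I J) (Cadd I J) (lact I J) (ract I J)
      (image_mset (\<lambda>(u, v). (u, v, e k)) (DeltaC I J (a k))) {#(a k, piC (\<lambda>_. 1), e k)#}" for k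
    using teq3_tensor_right[OF DeltaC_piC_fst[where g = "\<lambda>i. rep (c (i, k))"], of "e k"]
    by (simp add: a_def e_def piC_in)
  moreover have "teq3 (Acar I J) (Ccar I J) (Cadd I J) (lact I J) (ract I J)
      (image_mset (\<lambda>(u, v). (a k, u, v)) (DeltaC I J (e k))) {#(a k, piC (\<lambda>_. 1), e k)#}" for k
    using teq3_tensor_left[OF DeltaC_piC_snd[where g = "\<lambda>j. if k = j then 1 else 0"], of "a k"]
    by (simp add: a_def e_def piC_in)
  ultimately show ?thesis
    unfolding L R teq3_iff_fsum_eq by (intro fsum_eq_sum) (meson fsum_eq_sym fsum_eq_trans)
qed

lemma foldr_Cadd:
  "set xs \<subseteq> Ccar I J \<Longrightarrow> foldr (Cadd I J) xs (Czero I J) = piC (\<lambda>p. \<Sum>z\<leftarrow>xs. rep (z p))"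
proof (induction xs)
  case Nil
  then show ?case by (simp add: Czero_piC)
next
  case (Cons z xs)
  then have "foldr (Cadd I J) (z # xs) (Czero I J) = Cadd I J z (piC (\<lambda>p. \<Sum>z\<leftarrow>xs. rep (z p)))"
    by simp
  also have "\<dots> = piC (\<lambda>p. rep (z p) + (\<Sum>z\<leftarrow>xs. rep (z p)))"
    unfolding Cadd_rep by (intro piC_eqI cong_ideal_add cong_ideal_refl cong_rep_piC JJ_ideal)
  finally show ?case by simp
qed

lemma msum_Cadd_image_piC:
  "msum (Cadd I J) (Czero I J) (image_mset (\<lambda>k. piC (f k)) (mset_set I)) = piC (\<lambda>p. \<Sum>k\<in>I. f k p)"
proof -
  define xs where "xs = (SOME xs. mset xs = image_mset (\<lambda>k. piC (f k)) (mset_set I))"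
  have xs: "mset xs = image_mset (\<lambda>k. piC (f k)) (mset_set I)"
    unfolding xs_def by (rule someI_ex[OF ex_mset])
  have "set xs \<subseteq> Ccar I J"
    using arg_cong[OF xs, of set_mset] by (auto simp: piC_in)
  moreover have "(\<Sum>z\<leftarrow>xs. rep (z p)) = (\<Sum>k\<in>I. rep (piC (f k) p))" for p
    by (simp add: sum_mset_sum_list[symmetric] xs sum_unfold_sum_mset image_mset.compositionality comp_def)
  ultimately have "msum (Cadd I J) (Czero I J) (image_mset (\<lambda>k. piC (f k)) (mset_set I))
      = piC (\<lambda>p. \<Sum>k\<in>I. rep (piC (f k) p))"
    unfolding msum_def xs_def[symmetric] by (simp add: foldr_Cadd)
  also have "\<dots> = piC (\<lambda>p. \<Sum>k\<in>I. f k p)"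
    by (intro piC_eqI cong_ideal_sum cong_rep_piC JJ_ideal)
  finally show ?thesis .
qed

lemma DeltaC_counit_left:
  assumes c: "c \<in> Ccar I J"
  shows "msum (Cadd I J) (Czero I J) (image_mset (\<lambda>(x, y). lact I J (epsC I J x) y) (DeltaC I J c)) = c"
proof -
  have "msum (Cadd I J) (Czero I J) (image_mset (\<lambda>(x, y). lact I J (epsC I J x) y) (DeltaC I J c))
      = msum (Cadd I J) (Czero I J) (image_mset (\<lambda>k. piC
          (\<lambda>p. rep (piC (\<lambda>q. rep (c (fst q, k))) (fst p, fst p)) * (if k = snd p then 1 else 0))) (mset_set I))"
    by (simp only: DeltaC_piC image_mset.compositionality comp_def prod.case lact_epsC_piC)
  also have "\<dots> = piC (\<lambda>p. \<Sum>k\<in>I. rep (piC (\<lambda>q. rep (c (fst q, k))) (fst p, fst p)) * (if k = snd p then 1 else 0))"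
    by (rule msum_Cadd_image_piC)
  also have "\<dots> = piC (\<lambda>p. rep (c p))"
  proof (rule piC_eqI)
    fix p assume p: "p \<in> I \<times> I"
    then obtain i m where im: "p = (i, m)" "i \<in> I" "m \<in> I" by blast
    have "(\<Sum>k\<in>I. rep (piC (\<lambda>q. rep (c (fst q, k))) (fst p, fst p)) * (if k = snd p then 1 else 0))
        = rep (piC (\<lambda>q. rep (c (fst q, m))) (i, i))"
      unfolding im fst_conv snd_conv by (rule sum_mult_delta_right[OF finite_index im(3)])
    also have "cong_ideal (JJ J p) \<dots> (rep (c p))"
      using cong_ideal_mono[OF cong_rep_piC_diag[OF im(2), of "\<lambda>q. rep (c (fst q, m))"]
          J_subset_JJ(1)[OF im(2,3)]] im by simp
    finally show "cong_ideal (JJ J p)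
        (\<Sum>k\<in>I. rep (piC (\<lambda>q. rep (c (fst q, k))) (fst p, fst p)) * (if k = snd p then 1 else 0)) (rep (c p))" .
  qed
  also have "\<dots> = c" by (rule piC_rep[OF c])
  finally show ?thesis .
qed

lemma DeltaC_counit_right:
  assumes c: "c \<in> Ccar I J"
  shows "msum (Cadd I J) (Czero I J) (image_mset (\<lambda>(x, y). ract I J x (epsC I J y)) (DeltaC I J c)) = c"
proof -
  have "msum (Cadd I J) (Czero I J) (image_mset (\<lambda>(x, y). ract I J x (epsC I J y)) (DeltaC I J c))
      = msum (Cadd I J) (Czero I J) (image_mset (\<lambda>k. piC
          (\<lambda>p. rep (c (fst p, k)) * rep (piC (\<lambda>q. if k = snd q then 1 else 0) (snd p, snd p)))) (mset_set I))"
    by (simp only: DeltaC_piC image_mset.compositionality comp_def prod.case ract_epsC_piC)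
  also have "\<dots> = piC (\<lambda>p. \<Sum>k\<in>I. rep (c (fst p, k)) * rep (piC (\<lambda>q. if k = snd q then 1 else 0) (snd p, snd p)))"
    by (rule msum_Cadd_image_piC)
  also have "\<dots> = piC (\<lambda>p. rep (c p))"
  proof (rule piC_eqI)
    fix p assume p: "p \<in> I \<times> I"
    then obtain i m where im: "p = (i, m)" "i \<in> I" "m \<in> I" by blast
    have "cong_ideal (JJ J p) (rep (piC (\<lambda>q. if k = snd q then 1 else 0) (m, m))) (if k = m then 1 else 0)" for k
      using cong_ideal_mono[OF cong_rep_piC_diag[OF im(3), of "\<lambda>q. if k = snd q then 1 else 0"] J_subset_JJ(2)[OF im(2,3)]] im by simp
    then have "cong_ideal (JJ J p) (\<Sum>k\<in>I. rep (c (i, k)) * rep (piC (\<lambda>q. if k = snd q then 1 else 0) (m, m)))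
        (\<Sum>k\<in>I. rep (c (i, k)) * (if k = m then 1 else 0))"
      by (intro cong_ideal_sum cong_ideal_mult cong_ideal_refl JJ_ideal[OF p])
    also have "(\<Sum>k\<in>I. rep (c (i, k)) * (if k = m then 1 else 0)) = rep (c p)"
      unfolding im by (rule sum_mult_delta_right[OF finite_index im(3)])
    finally show "cong_ideal (JJ J p)
        (\<Sum>k\<in>I. rep (c (fst p, k)) * rep (piC (\<lambda>q. if k = snd q then 1 else 0) (snd p, snd p))) (rep (c p))"
      unfolding im by simp
  qed
  also have "\<dots> = c" by (rule piC_rep[OF c])
  finally show ?thesis .
qed

lemma C_coring:
  "coring (Acar I J) (Aadd I J) (Amul I J) (Aone I J) (Ccar I J) (Cadd I J) (Czero I J) (Cneg I J)
     (lact I J) (ract I J) (DeltaC I J) (epsC I J)"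
  unfolding coring_def
  using C_bimodule set_DeltaC epsC_in DeltaC_add DeltaC_bimodule_hom epsC_add epsC_bimodule_hom
    DeltaC_coassoc DeltaC_counit_left DeltaC_counit_right
  by blast

end

theorem proposition3p3:
  fixes sc :: "'k::field \<Rightarrow> 'b::ring_1 \<Rightarrow> 'b"
    and I :: "'i set" and J :: "'i \<Rightarrow> 'b set"
  assumes "k_algebra sc"
    and "finite I"
    and "\<forall>i\<in>I. two_sided_ideal (J i)"
    and "(\<Inter>i\<in>I. J i) = {0}"
  shows "bimodule (Acar I J) (Aadd I J) (Amul I J) (Aone I J)
           (Ccar I J) (Cadd I J) (Czero I J) (Cneg I J) (lact I J) (ract I J)
       \<and> (\<forall>c. \<forall>x\<in>Ccar I J. lact I J (kA sc I J c) x = ract I J x (kA sc I J c))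
       \<and> (\<forall>b b'. (\<forall>i\<in>I. \<forall>j\<in>I. cos (JJ J (i, j)) (b (i, j)) = cos (JJ J (i, j)) (b' (i, j))) \<longrightarrow>
             teq2 (Acar I J) (Ccar I J) (Cadd I J) (lact I J) (ract I J) (DeltaF I J b) (DeltaF I J b')
           \<and> epsF I J b = epsF I J b')
       \<and> (\<forall>b. teq2 (Acar I J) (Ccar I J) (Cadd I J) (lact I J) (ract I J) (DeltaF I J b) (DeltaF' I J b))
       \<and> coring (Acar I J) (Aadd I J) (Amul I J) (Aone I J)
           (Ccar I J) (Cadd I J) (Czero I J) (Cneg I J) (lact I J) (ract I J)
           (DeltaC I J) (epsC I J)"
proof -
  interpret ideal_family I J
    using assms(2,3) by unfold_locales auto
  show ?thesis
    using C_bimodule scalar_central[OF assms(1)] DeltaF_cong epsF_cong DeltaF_teqC_DeltaF' C_coring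
    by blast
qed

end
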